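(* Let $\mathcal{C}$ be a finitely complete 2-category. Every $\mathcal{F}_{\mathrm{bof}}$-quotient map in $\mathcal{C}$ is an effective $\mathcal{F}_{\mathrm{bof}}$-quotient map.
   Context: All 2-categories are strict and all limits and colimits are strict $\mathbf{Cat}$-enriched (weighted) ones; finitely complete means having all finite weighted limits. Let $\mathcal{K}_{\mathrm{bof}}$ be the 2-category generated by objects $1,2$, morphisms $u,v\colon2\to1$ and 2-cells $\alpha,\beta\colon u\Rightarrow v$. The $\mathcal{F}_{\mathrm{bof}}$-kernel of $f\colon A\to B$ is the 2-functor $\mathcal{K}_{\mathrm{bof}}\to\mathcal{C}$ sending $1\mapsto A$ and $u,v,\alpha,\beta$ to the universal data $u,v\colon\mathrm{Eq}(f)\to A$, $\alpha,\beta\colon u\Rightarrow v$ with $f\alpha=f\beta$ (a finite weighted limit). The $\mathcal{F}_{\mathrm{bof}}$-quotient of $X\colon\mathcal{K}_{\mathrm{bof}}\to\mathcal{C}$ is, when it exists, the coequifier $e\colon X1\to Q$ of $X\alpha,X\beta$, universal in the 2-categorical sense among morphisms $e$ with $e\cdot X\alpha=e\cdot X\beta$. A morphism is an $\mathcal{F}_{\mathrm{bof}}$-quotient map if it is isomorphic in the arrow 2-category $\mathcal{C}^{\mathbf 2}$ to the $\mathcal{F}_{\mathrm{bof}}$-quotient of some $X$; it is effective if its $\mathcal{F}_{\mathrm{bof}}$-kernel has an $\mathcal{F}_{\mathrm{bof}}$-quotient and the canonical comparison from that quotient to $f$ is invertible. *)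

theory Defs
  imports Main
begin

text \<open>A strict 2-category, presented with carrier sets of objects, 1-cells and 2-cells.
  cmp g f is the composite g after f (defined when cod1 f = dom1 g);
  vcmp t s is vertical composition t after s (defined when tgt2 s = src2 t);
  hcmp t s is horizontal composition, for s : f => f' : A -> B and t : g => g' : B -> C,
  giving a 2-cell (g f) => (g' f').\<close>

record ('o, 'm, 'c) two_cat =
  Ob :: "'o set"
  Mor :: "'m set"
  Cell :: "'c set"
  dom1 :: "'m \<Rightarrow> 'o"
  cod1 :: "'m \<Rightarrow> 'o"
  src2 :: "'c \<Rightarrow> 'm"
  tgt2 :: "'c \<Rightarrow> 'm"
  cmp :: "'m \<Rightarrow> 'm \<Rightarrow> 'm"
  idm :: "'o \<Rightarrow> 'm"
  vcmp :: "'c \<Rightarrow> 'c \<Rightarrow> 'c"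
  hcmp :: "'c \<Rightarrow> 'c \<Rightarrow> 'c"
  id2 :: "'m \<Rightarrow> 'c"

definition hom :: "('o, 'm, 'c, 'x) two_cat_scheme \<Rightarrow> 'o \<Rightarrow> 'o \<Rightarrow> 'm set" where
  "hom C A B = {f \<in> Mor C. dom1 C f = A \<and> cod1 C f = B}"

definition cells :: "('o, 'm, 'c, 'x) two_cat_scheme \<Rightarrow> 'm \<Rightarrow> 'm \<Rightarrow> 'c set" where
  "cells C f g = {s \<in> Cell C. src2 C s = f \<and> tgt2 C s = g}"

definition two_category :: "('o, 'm, 'c, 'x) two_cat_scheme \<Rightarrow> bool" where
  "two_category C \<longleftrightarrow>
    \<comment> \<open>objects and 1-cells form a category\<close>
    (\<forall>f \<in> Mor C. dom1 C f \<in> Ob C \<and> cod1 C f \<in> Ob C) \<and>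
    (\<forall>A \<in> Ob C. idm C A \<in> hom C A A) \<and>
    (\<forall>f \<in> Mor C. \<forall>g \<in> Mor C. cod1 C f = dom1 C g \<longrightarrow>
        cmp C g f \<in> hom C (dom1 C f) (cod1 C g)) \<and>
    (\<forall>f \<in> Mor C. cmp C (idm C (cod1 C f)) f = f \<and> cmp C f (idm C (dom1 C f)) = f) \<and>
    (\<forall>f \<in> Mor C. \<forall>g \<in> Mor C. \<forall>h \<in> Mor C. cod1 C f = dom1 C g \<and> cod1 C g = dom1 C h \<longrightarrow>
        cmp C h (cmp C g f) = cmp C (cmp C h g) f) \<and>
    \<comment> \<open>2-cells go between parallel 1-cells\<close>
    (\<forall>s \<in> Cell C. src2 C s \<in> Mor C \<and> tgt2 C s \<in> Mor C \<and>
        dom1 C (src2 C s) = dom1 C (tgt2 C s) \<and> cod1 C (src2 C s) = cod1 C (tgt2 C s)) \<and>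
    \<comment> \<open>vertical composition: each hom forms a category\<close>
    (\<forall>f \<in> Mor C. id2 C f \<in> cells C f f) \<and>
    (\<forall>s \<in> Cell C. \<forall>t \<in> Cell C. tgt2 C s = src2 C t \<longrightarrow>
        vcmp C t s \<in> cells C (src2 C s) (tgt2 C t)) \<and>
    (\<forall>s \<in> Cell C. vcmp C (id2 C (tgt2 C s)) s = s \<and> vcmp C s (id2 C (src2 C s)) = s) \<and>
    (\<forall>s \<in> Cell C. \<forall>t \<in> Cell C. \<forall>u \<in> Cell C. tgt2 C s = src2 C t \<and> tgt2 C t = src2 C u \<longrightarrow>
        vcmp C u (vcmp C t s) = vcmp C (vcmp C u t) s) \<and>
    \<comment> \<open>horizontal composition\<close>
    (\<forall>s \<in> Cell C. \<forall>t \<in> Cell C. cod1 C (src2 C s) = dom1 C (src2 C t) \<longrightarrow>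
        hcmp C t s \<in> cells C (cmp C (src2 C t) (src2 C s)) (cmp C (tgt2 C t) (tgt2 C s))) \<and>
    (\<forall>s \<in> Cell C. \<forall>t \<in> Cell C. \<forall>u \<in> Cell C.
        cod1 C (src2 C s) = dom1 C (src2 C t) \<and> cod1 C (src2 C t) = dom1 C (src2 C u) \<longrightarrow>
        hcmp C u (hcmp C t s) = hcmp C (hcmp C u t) s) \<and>
    (\<forall>s \<in> Cell C. hcmp C (id2 C (idm C (cod1 C (src2 C s)))) s = s \<and>
        hcmp C s (id2 C (idm C (dom1 C (src2 C s)))) = s) \<and>
    (\<forall>f \<in> Mor C. \<forall>g \<in> Mor C. cod1 C f = dom1 C g \<longrightarrow>
        hcmp C (id2 C g) (id2 C f) = id2 C (cmp C g f)) \<and>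
    \<comment> \<open>interchange law\<close>
    (\<forall>s \<in> Cell C. \<forall>s' \<in> Cell C. \<forall>t \<in> Cell C. \<forall>t' \<in> Cell C.
        tgt2 C s = src2 C s' \<and> tgt2 C t = src2 C t' \<and> cod1 C (src2 C s) = dom1 C (src2 C t) \<longrightarrow>
        hcmp C (vcmp C t' t) (vcmp C s' s) = vcmp C (hcmp C t' s') (hcmp C t s))"

definition lwh :: "('o, 'm, 'c, 'x) two_cat_scheme \<Rightarrow> 'm \<Rightarrow> 'c \<Rightarrow> 'c" where
  "lwh C f s = hcmp C (id2 C f) s"

definition rwh :: "('o, 'm, 'c, 'x) two_cat_scheme \<Rightarrow> 'c \<Rightarrow> 'm \<Rightarrow> 'c" where
  "rwh C s f = hcmp C s (id2 C f)"

definition iso1 :: "('o, 'm, 'c, 'x) two_cat_scheme \<Rightarrow> 'm \<Rightarrow> bool" where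
  "iso1 C f \<longleftrightarrow> f \<in> Mor C \<and> (\<exists>g \<in> hom C (cod1 C f) (dom1 C f).
      cmp C g f = idm C (dom1 C f) \<and> cmp C f g = idm C (cod1 C f))"

definition is_terminal :: "('o, 'm, 'c, 'x) two_cat_scheme \<Rightarrow> 'o \<Rightarrow> bool" where
  "is_terminal C T \<longleftrightarrow> T \<in> Ob C \<and>
    (\<forall>Y \<in> Ob C. (\<exists>!t. t \<in> hom C Y T) \<and>
       (\<forall>t \<in> hom C Y T. \<forall>t' \<in> hom C Y T. \<exists>!r. r \<in> cells C t t'))"

definition is_product :: "('o, 'm, 'c, 'x) two_cat_scheme \<Rightarrow> 'o \<Rightarrow> 'o \<Rightarrow> 'o \<Rightarrow> 'm \<Rightarrow> 'm \<Rightarrow> bool" where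
  "is_product C A B P p q \<longleftrightarrow> P \<in> Ob C \<and> p \<in> hom C P A \<and> q \<in> hom C P B \<and>
    (\<forall>Y \<in> Ob C. \<forall>x \<in> hom C Y A. \<forall>y \<in> hom C Y B.
       \<exists>!z. z \<in> hom C Y P \<and> cmp C p z = x \<and> cmp C q z = y) \<and>
    (\<forall>Y \<in> Ob C. \<forall>z \<in> hom C Y P. \<forall>z' \<in> hom C Y P.
       \<forall>s \<in> cells C (cmp C p z) (cmp C p z'). \<forall>t \<in> cells C (cmp C q z) (cmp C q z').
       \<exists>!r. r \<in> cells C z z' \<and> lwh C p r = s \<and> lwh C q r = t)"

definition is_equalizer :: "('o, 'm, 'c, 'x) two_cat_scheme \<Rightarrow> 'm \<Rightarrow> 'm \<Rightarrow> 'o \<Rightarrow> 'm \<Rightarrow> bool" where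
  "is_equalizer C f g E m \<longleftrightarrow> E \<in> Ob C \<and> m \<in> hom C E (dom1 C f) \<and> cmp C f m = cmp C g m \<and>
    (\<forall>Y \<in> Ob C. \<forall>x \<in> hom C Y (dom1 C f). cmp C f x = cmp C g x \<longrightarrow>
       (\<exists>!z. z \<in> hom C Y E \<and> cmp C m z = x)) \<and>
    (\<forall>Y \<in> Ob C. \<forall>z \<in> hom C Y E. \<forall>z' \<in> hom C Y E.
       \<forall>s \<in> cells C (cmp C m z) (cmp C m z'). lwh C f s = lwh C g s \<longrightarrow>
       (\<exists>!r. r \<in> cells C z z' \<and> lwh C m r = s))"

text \<open>Cotensor of an object with the arrow category 2 (arrow object).\<close>
definition is_arrow_object :: "('o, 'm, 'c, 'x) two_cat_scheme \<Rightarrow> 'o \<Rightarrow> 'o \<Rightarrow> 'm \<Rightarrow> 'm \<Rightarrow> 'c \<Rightarrow> bool" where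
  "is_arrow_object C A P d0 d1 l \<longleftrightarrow> P \<in> Ob C \<and> d0 \<in> hom C P A \<and> d1 \<in> hom C P A \<and>
    l \<in> cells C d0 d1 \<and>
    (\<forall>Y \<in> Ob C. \<forall>x \<in> hom C Y A. \<forall>y \<in> hom C Y A. \<forall>g \<in> cells C x y.
       \<exists>!z. z \<in> hom C Y P \<and> cmp C d0 z = x \<and> cmp C d1 z = y \<and> rwh C l z = g) \<and>
    (\<forall>Y \<in> Ob C. \<forall>z \<in> hom C Y P. \<forall>z' \<in> hom C Y P.
       \<forall>s \<in> cells C (cmp C d0 z) (cmp C d0 z'). \<forall>t \<in> cells C (cmp C d1 z) (cmp C d1 z').
       vcmp C (rwh C l z') s = vcmp C t (rwh C l z) \<longrightarrow>
       (\<exists>!r. r \<in> cells C z z' \<and> lwh C d0 r = s \<and> lwh C d1 r = t))"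

text \<open>A 2-category has all finite weighted limits iff it has a terminal object, binary products,
  equalizers and cotensors with the arrow category 2 (Street 1976; Kelly).\<close>
definition finitely_complete :: "('o, 'm, 'c, 'x) two_cat_scheme \<Rightarrow> bool" where
  "finitely_complete C \<longleftrightarrow>
    (\<exists>T. is_terminal C T) \<and>
    (\<forall>A \<in> Ob C. \<forall>B \<in> Ob C. \<exists>P p q. is_product C A B P p q) \<and>
    (\<forall>f \<in> Mor C. \<forall>g \<in> Mor C. dom1 C f = dom1 C g \<and> cod1 C f = cod1 C g \<longrightarrow>
        (\<exists>E m. is_equalizer C f g E m)) \<and>
    (\<forall>A \<in> Ob C. \<exists>P d0 d1 l. is_arrow_object C A P d0 d1 l)"

text \<open>A 2-functor X from K_bof is exactly the data X2, X1, Xu, Xv : X2 -> X1, Xalpha, Xbeta : Xu => Xv.\<close>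
definition bof_diagram :: "('o, 'm, 'c, 'x) two_cat_scheme \<Rightarrow> 'o \<Rightarrow> 'o \<Rightarrow> 'm \<Rightarrow> 'm \<Rightarrow> 'c \<Rightarrow> 'c \<Rightarrow> bool" where
  "bof_diagram C X2 X1 u v a b \<longleftrightarrow> X2 \<in> Ob C \<and> X1 \<in> Ob C \<and>
    u \<in> hom C X2 X1 \<and> v \<in> hom C X2 X1 \<and> a \<in> cells C u v \<and> b \<in> cells C u v"

definition is_coequifier :: "('o, 'm, 'c, 'x) two_cat_scheme \<Rightarrow> 'c \<Rightarrow> 'c \<Rightarrow> 'o \<Rightarrow> 'm \<Rightarrow> bool" where
  "is_coequifier C a b Q e \<longleftrightarrow>
    a \<in> Cell C \<and> b \<in> Cell C \<and> src2 C a = src2 C b \<and> tgt2 C a = tgt2 C b \<and>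
    Q \<in> Ob C \<and> e \<in> hom C (cod1 C (src2 C a)) Q \<and> lwh C e a = lwh C e b \<and>
    (\<forall>Y \<in> Ob C. \<forall>g \<in> hom C (cod1 C (src2 C a)) Y. lwh C g a = lwh C g b \<longrightarrow>
       (\<exists>!h. h \<in> hom C Q Y \<and> cmp C h e = g)) \<and>
    (\<forall>Y \<in> Ob C. \<forall>h \<in> hom C Q Y. \<forall>h' \<in> hom C Q Y. \<forall>t \<in> cells C (cmp C h e) (cmp C h' e).
       \<exists>!p. p \<in> cells C h h' \<and> rwh C p e = t)"

text \<open>Isomorphism in the arrow 2-category C^2 (1-cells are strictly commuting squares).\<close>
definition arrow_iso :: "('o, 'm, 'c, 'x) two_cat_scheme \<Rightarrow> 'm \<Rightarrow> 'm \<Rightarrow> bool" where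
  "arrow_iso C f e \<longleftrightarrow> f \<in> Mor C \<and> e \<in> Mor C \<and>
    (\<exists>x \<in> hom C (dom1 C f) (dom1 C e). \<exists>y \<in> hom C (cod1 C f) (cod1 C e).
       iso1 C x \<and> iso1 C y \<and> cmp C e x = cmp C y f)"

definition bof_quotient_map :: "('o, 'm, 'c, 'x) two_cat_scheme \<Rightarrow> 'm \<Rightarrow> bool" where
  "bof_quotient_map C f \<longleftrightarrow> f \<in> Mor C \<and>
    (\<exists>X2 X1 u v a b Q e. bof_diagram C X2 X1 u v a b \<and> is_coequifier C a b Q e \<and> arrow_iso C f e)"

definition is_bof_kernel :: "('o, 'm, 'c, 'x) two_cat_scheme \<Rightarrow> 'm \<Rightarrow> 'o \<Rightarrow> 'm \<Rightarrow> 'm \<Rightarrow> 'c \<Rightarrow> 'c \<Rightarrow> bool" where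
  "is_bof_kernel C f E u v a b \<longleftrightarrow> f \<in> Mor C \<and> E \<in> Ob C \<and>
    u \<in> hom C E (dom1 C f) \<and> v \<in> hom C E (dom1 C f) \<and> a \<in> cells C u v \<and> b \<in> cells C u v \<and>
    lwh C f a = lwh C f b \<and>
    (\<forall>Y \<in> Ob C. \<forall>x \<in> hom C Y (dom1 C f). \<forall>y \<in> hom C Y (dom1 C f).
       \<forall>g \<in> cells C x y. \<forall>d \<in> cells C x y. lwh C f g = lwh C f d \<longrightarrow>
       (\<exists>!z. z \<in> hom C Y E \<and> cmp C u z = x \<and> cmp C v z = y \<and> rwh C a z = g \<and> rwh C b z = d)) \<and>
    (\<forall>Y \<in> Ob C. \<forall>z \<in> hom C Y E. \<forall>z' \<in> hom C Y E.
       \<forall>s \<in> cells C (cmp C u z) (cmp C u z'). \<forall>t \<in> cells C (cmp C v z) (cmp C v z').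
       vcmp C (rwh C a z') s = vcmp C t (rwh C a z) \<and> vcmp C (rwh C b z') s = vcmp C t (rwh C b z) \<longrightarrow>
       (\<exists>!r. r \<in> cells C z z' \<and> lwh C u r = s \<and> lwh C v r = t))"

definition effective_bof_quotient_map :: "('o, 'm, 'c, 'x) two_cat_scheme \<Rightarrow> 'm \<Rightarrow> bool" where
  "effective_bof_quotient_map C f \<longleftrightarrow> f \<in> Mor C \<and>
    (\<exists>E u v a b. is_bof_kernel C f E u v a b \<and>
      (\<exists>Q e. is_coequifier C a b Q e \<and>
        (\<exists>h \<in> hom C Q (cod1 C f). cmp C h e = f \<and> iso1 C h)))"

end

theory Submission
  imports Defs
begin

text \<open>A quotient map f is isomorphic in the arrow 2-category to a coequifier, and coequifiers are
  stable under such isomorphisms, so f itself coequifies some pair a, b : u \<Rightarrow> v. Since f a = f b,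
  the pair factors through the kernel (ku, kv, \<alpha>, \<beta>) of f as a = \<alpha> z, b = \<beta> z. Every g with
  g \<alpha> = g \<beta> then satisfies g a = g b, and the two-dimensional half of the universal property does
  not mention the 2-cells; hence f is a coequifier of its own kernel, with the identity as
  comparison.

  Finite completeness is only needed to build the kernel. Over the arrow object P of A, pairs of
  1-cells into P with a common boundary (two equalizers in P \<times> P) classify parallel pairs of
  2-cells, and equalizing the two induced maps into the arrow object of B imposes f \<alpha> = f \<beta>.\<close>

lemma ex1_unique: "\<exists>!x. P x \<Longrightarrow> P a \<Longrightarrow> P b \<Longrightarrow> a = b"
  by blast

locale strict_two_category =
  fixes C :: "('o, 'm, 'c) two_cat"
  assumes two_category: "two_category C"
begin

lemma homD: assumes "f \<in> hom C A B" shows "f \<in> Mor C" "dom1 C f = A" "cod1 C f = B"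
  using assms by (auto simp: hom_def)

lemma hom_obs: assumes "f \<in> hom C A B" shows "A \<in> Ob C" "B \<in> Ob C"
  using assms two_category unfolding two_category_def hom_def by auto

lemma cmp_in_hom: "f \<in> hom C A B \<Longrightarrow> g \<in> hom C B D \<Longrightarrow> cmp C g f \<in> hom C A D"
  using two_category unfolding two_category_def hom_def by auto

lemma idm_in_hom: "A \<in> Ob C \<Longrightarrow> idm C A \<in> hom C A A"
  using two_category unfolding two_category_def by auto

lemma cmp_idm_left: "f \<in> hom C A B \<Longrightarrow> cmp C (idm C B) f = f"
  using two_category unfolding two_category_def hom_def by auto

lemma cmp_idm_right: "f \<in> hom C A B \<Longrightarrow> cmp C f (idm C A) = f"
  using two_category unfolding two_category_def hom_def by auto

lemma cmp_assoc: "f \<in> hom C A B \<Longrightarrow> g \<in> hom C B D \<Longrightarrow> h \<in> hom C D E \<Longrightarrow>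
   cmp C h (cmp C g f) = cmp C (cmp C h g) f"
  using two_category unfolding two_category_def hom_def by auto

lemma cellsD: assumes "s \<in> cells C f g" shows "s \<in> Cell C" "src2 C s = f" "tgt2 C s = g"
  using assms by (auto simp: cells_def)

lemma cells_tgt_in_hom: "s \<in> cells C f g \<Longrightarrow> f \<in> hom C A B \<Longrightarrow> g \<in> hom C A B"
  using two_category unfolding two_category_def hom_def cells_def by auto

lemma id2_in_cells: "f \<in> hom C A B \<Longrightarrow> id2 C f \<in> cells C f f"
  using two_category unfolding two_category_def hom_def by auto

lemma hcmp_in_cells: "s \<in> cells C f f' \<Longrightarrow> t \<in> cells C g g' \<Longrightarrow> f \<in> hom C A B \<Longrightarrow> g \<in> hom C B D
   \<Longrightarrow> hcmp C t s \<in> cells C (cmp C g f) (cmp C g' f')"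
  using two_category unfolding two_category_def cells_def hom_def by auto

lemma hcmp_assoc: "s \<in> cells C f f' \<Longrightarrow> t \<in> cells C g g' \<Longrightarrow> u \<in> cells C h h' \<Longrightarrow>
   f \<in> hom C A B \<Longrightarrow> g \<in> hom C B D \<Longrightarrow> h \<in> hom C D E \<Longrightarrow>
   hcmp C u (hcmp C t s) = hcmp C (hcmp C u t) s"
  using two_category unfolding two_category_def cells_def hom_def by auto

lemma hcmp_id2: "f \<in> hom C A B \<Longrightarrow> g \<in> hom C B D \<Longrightarrow> hcmp C (id2 C g) (id2 C f) = id2 C (cmp C g f)"
  using two_category unfolding two_category_def hom_def by auto

lemma interchange: "s \<in> cells C f f' \<Longrightarrow> s' \<in> cells C f' f'' \<Longrightarrow> t \<in> cells C g g' \<Longrightarrow> t' \<in> cells C g' g''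
   \<Longrightarrow> f \<in> hom C A B \<Longrightarrow> g \<in> hom C B D \<Longrightarrow>
   hcmp C (vcmp C t' t) (vcmp C s' s) = vcmp C (hcmp C t' s') (hcmp C t s)"
  using two_category unfolding two_category_def cells_def hom_def by auto

lemma vcmp_id2_left: "s \<in> cells C f g \<Longrightarrow> vcmp C (id2 C g) s = s"
  using two_category unfolding two_category_def cells_def by auto

lemma vcmp_id2_right: "s \<in> cells C f g \<Longrightarrow> vcmp C s (id2 C f) = s"
  using two_category unfolding two_category_def cells_def by auto

lemma lwh_in_cells: "s \<in> cells C f f' \<Longrightarrow> f \<in> hom C A B \<Longrightarrow> h \<in> hom C B D \<Longrightarrow>
   lwh C h s \<in> cells C (cmp C h f) (cmp C h f')"
  unfolding lwh_def by (rule hcmp_in_cells) (auto intro: id2_in_cells)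

lemma rwh_in_cells: "s \<in> cells C f f' \<Longrightarrow> f \<in> hom C A B \<Longrightarrow> z \<in> hom C Y A \<Longrightarrow>
   rwh C s z \<in> cells C (cmp C f z) (cmp C f' z)"
  unfolding rwh_def by (rule hcmp_in_cells) (auto intro: id2_in_cells)

lemma lwh_lwh: "s \<in> cells C f f' \<Longrightarrow> f \<in> hom C A B \<Longrightarrow> h \<in> hom C B D \<Longrightarrow> g \<in> hom C D E \<Longrightarrow>
   lwh C g (lwh C h s) = lwh C (cmp C g h) s"
  unfolding lwh_def
  by (subst hcmp_assoc[where A=A and B=B and D=D and E=E]) (auto intro: id2_in_cells simp: hcmp_id2)

lemma rwh_rwh: "s \<in> cells C f f' \<Longrightarrow> f \<in> hom C A B \<Longrightarrow> z \<in> hom C Y A \<Longrightarrow> z' \<in> hom C X Y \<Longrightarrow>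
   rwh C (rwh C s z) z' = rwh C s (cmp C z z')"
  unfolding rwh_def
  by (subst hcmp_id2[symmetric], assumption, assumption,
      subst hcmp_assoc[where A=X and B=Y and D=A and E=B]) (auto intro: id2_in_cells)

lemma lwh_rwh: "s \<in> cells C f f' \<Longrightarrow> f \<in> hom C A B \<Longrightarrow> z \<in> hom C Y A \<Longrightarrow> h \<in> hom C B D \<Longrightarrow>
   lwh C h (rwh C s z) = rwh C (lwh C h s) z"
  unfolding rwh_def lwh_def
  by (subst hcmp_assoc[where A=Y and B=A and D=B and E=D]) (auto intro: id2_in_cells)

lemma rwh_idm: "s \<in> cells C f f' \<Longrightarrow> f \<in> hom C A B \<Longrightarrow> rwh C s (idm C A) = s"
  unfolding rwh_def using two_category unfolding two_category_def cells_def hom_def by auto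

lemma whisker_naturality:
  assumes \<sigma>: "\<sigma> \<in> cells C h h'" and h: "h \<in> hom C A B" and r: "r \<in> cells C z z'" and z: "z \<in> hom C Y A"
  shows "vcmp C (rwh C \<sigma> z') (lwh C h r) = vcmp C (lwh C h' r) (rwh C \<sigma> z)"
proof -
  have h': "h' \<in> hom C A B" and z': "z' \<in> hom C Y A" using cells_tgt_in_hom assms by blast+
  have "vcmp C (rwh C \<sigma> z') (lwh C h r) = hcmp C (vcmp C \<sigma> (id2 C h)) (vcmp C (id2 C z') r)"
    unfolding rwh_def lwh_def
    by (rule interchange[OF r id2_in_cells[OF z'] id2_in_cells[OF h] \<sigma> z h, symmetric])
  also have "\<dots> = hcmp C (vcmp C (id2 C h') \<sigma>) (vcmp C r (id2 C z))"
    using vcmp_id2_left vcmp_id2_right \<sigma> r by simp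
  also have "\<dots> = vcmp C (lwh C h' r) (rwh C \<sigma> z)"
    unfolding rwh_def lwh_def
    by (rule interchange[OF id2_in_cells[OF z] r \<sigma> id2_in_cells[OF h'] z h])
  finally show ?thesis .
qed

lemma cmp_in_Mor: assumes "f \<in> Mor C" "g \<in> Mor C" "cod1 C f = dom1 C g"
  shows "cmp C g f \<in> Mor C" "dom1 C (cmp C g f) = dom1 C f" "cod1 C (cmp C g f) = cod1 C g"
  using cmp_in_hom[of f "dom1 C f" "cod1 C f" g "cod1 C g"] assms by (auto simp: hom_def)

lemma cmp_assoc_Mor: assumes "f \<in> Mor C" "g \<in> Mor C" "h \<in> Mor C" "cod1 C f = dom1 C g" "cod1 C g = dom1 C h"
  shows "cmp C (cmp C h g) f = cmp C h (cmp C g f)"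
  using cmp_assoc[of f "dom1 C f" "cod1 C f" g "cod1 C g" h "cod1 C h"] assms by (simp add: hom_def)

lemma Cell_bounds: assumes "s \<in> Cell C"
  shows "src2 C s \<in> Mor C" "tgt2 C s \<in> Mor C"
    "dom1 C (tgt2 C s) = dom1 C (src2 C s)" "cod1 C (tgt2 C s) = cod1 C (src2 C s)"
  using assms two_category unfolding two_category_def by auto

lemma Cell_in_cells: "s \<in> Cell C \<Longrightarrow> s \<in> cells C (src2 C s) (tgt2 C s)"
  by (simp add: cells_def)

lemma src_in_hom: "s \<in> Cell C \<Longrightarrow> src2 C s \<in> hom C (dom1 C (src2 C s)) (cod1 C (src2 C s))"
  using Cell_bounds(1) by (simp add: hom_def)

lemma lwh_in_Cell: assumes "s \<in> Cell C" "h \<in> Mor C" "cod1 C (src2 C s) = dom1 C h"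
  shows "lwh C h s \<in> Cell C" "src2 C (lwh C h s) = cmp C h (src2 C s)"
    "tgt2 C (lwh C h s) = cmp C h (tgt2 C s)"
  using lwh_in_cells[OF Cell_in_cells src_in_hom, of s h "cod1 C h"] assms by (auto simp: hom_def cells_def)

lemma rwh_in_Cell: assumes "s \<in> Cell C" "z \<in> Mor C" "cod1 C z = dom1 C (src2 C s)"
  shows "rwh C s z \<in> Cell C" "src2 C (rwh C s z) = cmp C (src2 C s) z"
    "tgt2 C (rwh C s z) = cmp C (tgt2 C s) z"
  using rwh_in_cells[OF Cell_in_cells src_in_hom, of s z "dom1 C z"] assms by (auto simp: hom_def cells_def)

lemma lwh_cmp_Mor: assumes "s \<in> Cell C" "h \<in> Mor C" "g \<in> Mor C"
    "cod1 C (src2 C s) = dom1 C h" "cod1 C h = dom1 C g"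
  shows "lwh C (cmp C g h) s = lwh C g (lwh C h s)"
  using lwh_lwh[OF Cell_in_cells src_in_hom, of s h "cod1 C h" g "cod1 C g"] assms by (simp add: hom_def)

lemma rwh_rwh_Mor: assumes "s \<in> Cell C" "z \<in> Mor C" "z' \<in> Mor C"
    "cod1 C z = dom1 C (src2 C s)" "cod1 C z' = dom1 C z"
  shows "rwh C (rwh C s z) z' = rwh C s (cmp C z z')"
  using rwh_rwh[OF Cell_in_cells src_in_hom, of s z "dom1 C z" z' "dom1 C z'"] assms by (simp add: hom_def)

lemma rwh_lwh_Mor: assumes "s \<in> Cell C" "h \<in> Mor C" "z \<in> Mor C"
    "cod1 C (src2 C s) = dom1 C h" "cod1 C z = dom1 C (src2 C s)"
  shows "rwh C (lwh C h s) z = lwh C h (rwh C s z)"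
  using lwh_rwh[OF Cell_in_cells src_in_hom, of s z "dom1 C z" h "cod1 C h"] assms by (simp add: hom_def)

lemma cmp_idm_Mor:
  "f \<in> Mor C \<Longrightarrow> dom1 C f = A \<Longrightarrow> cmp C f (idm C A) = f"
  "f \<in> Mor C \<Longrightarrow> cod1 C f = B \<Longrightarrow> cmp C (idm C B) f = f"
  using cmp_idm_right[of f A "cod1 C f"] cmp_idm_left[of f "dom1 C f" B] by (auto simp: hom_def)

lemma rwh_idm_Cell: assumes "s \<in> Cell C" "dom1 C (src2 C s) = A" shows "rwh C s (idm C A) = s"
  using rwh_idm[OF Cell_in_cells[OF assms(1)] src_in_hom[OF assms(1)]] assms(2) by simp

lemma cmp_inverse_Mor:
  assumes "cmp C g f = idm C A" "f \<in> hom C A B" "g \<in> hom C B A" "z \<in> Mor C" "cod1 C z = A"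
  shows "cmp C g (cmp C f z) = z"
  using assms cmp_assoc[of z "dom1 C z" A f B g A] cmp_idm_Mor(2)[of z A] by (simp add: hom_def)

lemma iso1_inverse:
  assumes "iso1 C x" "x \<in> hom C A B"
  obtains xi where "xi \<in> hom C B A" "cmp C xi x = idm C A" "cmp C x xi = idm C B"
  using assms homD[OF assms(2)] unfolding iso1_def by blast

lemma iso1_idm: "A \<in> Ob C \<Longrightarrow> iso1 C (idm C A)"
  unfolding iso1_def using idm_in_hom[of A] cmp_idm_left[OF idm_in_hom[of A]] homD[OF idm_in_hom[of A]] by auto

text \<open>Conditional rewrite rules bringing composites into a normal form (1-cells associated to the
  right, whiskerings as \<open>lwh h (\<dots> (rwh s z))\<close>); the simplifier discharges their side
  conditions from the typing facts of the atoms involved.\<close>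
lemmas normalize_composites = cmp_in_Mor cmp_assoc_Mor Cell_bounds lwh_in_Cell rwh_in_Cell
  lwh_cmp_Mor rwh_rwh_Mor rwh_lwh_Mor

section \<open>Finite limits\<close>

lemma equalizer_universal:
  "is_equalizer C f g E m \<Longrightarrow> Y \<in> Ob C \<Longrightarrow> x \<in> hom C Y (dom1 C f) \<Longrightarrow> cmp C f x = cmp C g x \<Longrightarrow>
      \<exists>!z. z \<in> hom C Y E \<and> cmp C m z = x"
  "is_equalizer C f g E m \<Longrightarrow> Y \<in> Ob C \<Longrightarrow> z \<in> hom C Y E \<Longrightarrow> z' \<in> hom C Y E \<Longrightarrow>
      s \<in> cells C (cmp C m z) (cmp C m z') \<Longrightarrow> lwh C f s = lwh C g s \<Longrightarrow>
      \<exists>!r. r \<in> cells C z z' \<and> lwh C m r = s"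
  unfolding is_equalizer_def by blast+

lemma equalizerD: assumes "is_equalizer C f g E m" "f \<in> hom C A B"
  shows "E \<in> Ob C" "m \<in> hom C E A" "cmp C f m = cmp C g m"
proof -
  have "E \<in> Ob C" "m \<in> hom C E (dom1 C f)" "cmp C f m = cmp C g m"
    using assms(1) unfolding is_equalizer_def by - (elim conjE, assumption)+
  then show "E \<in> Ob C" "m \<in> hom C E A" "cmp C f m = cmp C g m" using homD(2)[OF assms(2)] by simp_all
qed

lemma equalizer_factor:
  assumes eq: "is_equalizer C f g E m" and f: "f \<in> hom C A B" and x: "x \<in> hom C Y A"
    and "cmp C f x = cmp C g x"
  obtains z where "z \<in> hom C Y E" "cmp C m z = x"
proof -
  have "x \<in> hom C Y (dom1 C f)" using x homD(2)[OF f] by simp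
  from equalizer_universal(1)[OF eq hom_obs(1)[OF x] this assms(4)] that show ?thesis by blast
qed

lemma equalizer_cancel:
  assumes eq: "is_equalizer C f g E m" and f: "f \<in> hom C A B" and g: "g \<in> hom C A B"
    and z: "z \<in> hom C Y E" "z' \<in> hom C Y E" and mz: "cmp C m z = cmp C m z'"
  shows "z = z'"
proof -
  note E = equalizerD[OF eq f]
  have x: "cmp C m z \<in> hom C Y (dom1 C f)" using cmp_in_hom[OF z(1) E(2)] homD(2)[OF f] by simp
  have "cmp C f (cmp C m z) = cmp C g (cmp C m z)"
    using cmp_assoc[OF z(1) E(2) f] cmp_assoc[OF z(1) E(2) g] E(3) by simp
  from equalizer_universal(1)[OF eq hom_obs(1)[OF z(1)] x this] show ?thesis
    by (rule ex1_unique) (use z mz in simp_all)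
qed

lemma equalizer_factor2:
  assumes eq: "is_equalizer C f g E m" and z: "z \<in> hom C Y E" "z' \<in> hom C Y E"
    and "s \<in> cells C (cmp C m z) (cmp C m z')" "lwh C f s = lwh C g s"
  obtains r where "r \<in> cells C z z'" "lwh C m r = s"
  using equalizer_universal(2)[OF eq hom_obs(1)[OF z(1)] z assms(4,5)] that by blast

lemma equalizer_cancel2:
  assumes eq: "is_equalizer C f g E m" and f: "f \<in> hom C A B" and g: "g \<in> hom C A B"
    and z: "z \<in> hom C Y E" and r: "r \<in> cells C z z'" "r' \<in> cells C z z'" and mr: "lwh C m r = lwh C m r'"
  shows "r = r'"
proof -
  note E = equalizerD[OF eq f]
  have z': "z' \<in> hom C Y E" using cells_tgt_in_hom r(1) z by blast
  have s: "lwh C m r \<in> cells C (cmp C m z) (cmp C m z')" using lwh_in_cells[OF r(1) z E(2)] .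
  have "lwh C f (lwh C m r) = lwh C g (lwh C m r)"
    using lwh_lwh[OF r(1) z E(2) f] lwh_lwh[OF r(1) z E(2) g] E(3) by simp
  from equalizer_universal(2)[OF eq hom_obs(1)[OF z] z z' s this] show ?thesis
    by (rule ex1_unique) (use r mr in simp_all)
qed

lemma product_universal:
  "is_product C A B P p q \<Longrightarrow> Y \<in> Ob C \<Longrightarrow> x \<in> hom C Y A \<Longrightarrow> y \<in> hom C Y B \<Longrightarrow>
      \<exists>!z. z \<in> hom C Y P \<and> cmp C p z = x \<and> cmp C q z = y"
  "is_product C A B P p q \<Longrightarrow> Y \<in> Ob C \<Longrightarrow> z \<in> hom C Y P \<Longrightarrow> z' \<in> hom C Y P \<Longrightarrow>
      s \<in> cells C (cmp C p z) (cmp C p z') \<Longrightarrow> t \<in> cells C (cmp C q z) (cmp C q z') \<Longrightarrow>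
      \<exists>!r. r \<in> cells C z z' \<and> lwh C p r = s \<and> lwh C q r = t"
  unfolding is_product_def by blast+

lemma productD: assumes "is_product C A B P p q"
  shows "P \<in> Ob C" "p \<in> hom C P A" "q \<in> hom C P B"
  using assms unfolding is_product_def by - (elim conjE, assumption)+

lemma product_pair:
  assumes pr: "is_product C A B P p q" and x: "x \<in> hom C Y A" and y: "y \<in> hom C Y B"
  obtains z where "z \<in> hom C Y P" "cmp C p z = x" "cmp C q z = y"
  using product_universal(1)[OF pr hom_obs(1)[OF x] x y] that by blast

lemma product_cancel:
  assumes pr: "is_product C A B P p q" and z: "z \<in> hom C Y P" "z' \<in> hom C Y P"
    and "cmp C p z = cmp C p z'" "cmp C q z = cmp C q z'"
  shows "z = z'"
proof -
  note P = productD[OF pr]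
  have "cmp C p z \<in> hom C Y A" "cmp C q z \<in> hom C Y B" using cmp_in_hom[OF z(1)] P by blast+
  from product_universal(1)[OF pr hom_obs(1)[OF z(1)] this] show ?thesis
    by (rule ex1_unique) (use assms in simp_all)
qed

lemma product_pair2:
  assumes pr: "is_product C A B P p q" and z: "z \<in> hom C Y P" "z' \<in> hom C Y P"
    and "s \<in> cells C (cmp C p z) (cmp C p z')" "t \<in> cells C (cmp C q z) (cmp C q z')"
  obtains r where "r \<in> cells C z z'" "lwh C p r = s" "lwh C q r = t"
  using product_universal(2)[OF pr hom_obs(1)[OF z(1)] z assms(4,5)] that by blast

lemma product_cancel2:
  assumes pr: "is_product C A B P p q" and z: "z \<in> hom C Y P"
    and r: "r \<in> cells C z z'" "r' \<in> cells C z z'" and "lwh C p r = lwh C p r'" "lwh C q r = lwh C q r'"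
  shows "r = r'"
proof -
  note P = productD[OF pr]
  have z': "z' \<in> hom C Y P" using cells_tgt_in_hom r(1) z by blast
  have "lwh C p r \<in> cells C (cmp C p z) (cmp C p z')" "lwh C q r \<in> cells C (cmp C q z) (cmp C q z')"
    using lwh_in_cells[OF r(1) z] P by blast+
  from product_universal(2)[OF pr hom_obs(1)[OF z] z z' this] show ?thesis
    by (rule ex1_unique) (use assms in simp_all)
qed

lemma arrow_object_universal:
  "is_arrow_object C A P d0 d1 l \<Longrightarrow> Y \<in> Ob C \<Longrightarrow> x \<in> hom C Y A \<Longrightarrow> y \<in> hom C Y A \<Longrightarrow>
      g \<in> cells C x y \<Longrightarrow> \<exists>!z. z \<in> hom C Y P \<and> cmp C d0 z = x \<and> cmp C d1 z = y \<and> rwh C l z = g"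
  "is_arrow_object C A P d0 d1 l \<Longrightarrow> Y \<in> Ob C \<Longrightarrow> z \<in> hom C Y P \<Longrightarrow> z' \<in> hom C Y P \<Longrightarrow>
      s \<in> cells C (cmp C d0 z) (cmp C d0 z') \<Longrightarrow> t \<in> cells C (cmp C d1 z) (cmp C d1 z') \<Longrightarrow>
      vcmp C (rwh C l z') s = vcmp C t (rwh C l z) \<Longrightarrow>
      \<exists>!r. r \<in> cells C z z' \<and> lwh C d0 r = s \<and> lwh C d1 r = t"
  unfolding is_arrow_object_def by blast+

lemma arrow_objectD: assumes "is_arrow_object C A P d0 d1 l"
  shows "P \<in> Ob C" "d0 \<in> hom C P A" "d1 \<in> hom C P A" "l \<in> cells C d0 d1"
  using assms unfolding is_arrow_object_def by - (elim conjE, assumption)+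

lemma arrow_object_factor:
  assumes ar: "is_arrow_object C A P d0 d1 l" and g: "g \<in> cells C x y" and x: "x \<in> hom C Y A"
  obtains z where "z \<in> hom C Y P" "cmp C d0 z = x" "cmp C d1 z = y" "rwh C l z = g"
  using arrow_object_universal(1)[OF ar hom_obs(1)[OF x] x cells_tgt_in_hom[OF g x] g] that by blast

lemma arrow_object_cancel:
  assumes ar: "is_arrow_object C A P d0 d1 l" and z: "z \<in> hom C Y P" "z' \<in> hom C Y P"
    and "cmp C d0 z = cmp C d0 z'" "cmp C d1 z = cmp C d1 z'" "rwh C l z = rwh C l z'"
  shows "z = z'"
proof -
  note P = arrow_objectD[OF ar]
  have "cmp C d0 z \<in> hom C Y A" "cmp C d1 z \<in> hom C Y A" using cmp_in_hom[OF z(1)] P by blast+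
  moreover have "rwh C l z \<in> cells C (cmp C d0 z) (cmp C d1 z)" using rwh_in_cells[OF P(4,2) z(1)] .
  ultimately show ?thesis
    by (rule ex1_unique[OF arrow_object_universal(1)[OF ar hom_obs(1)[OF z(1)]]]) (use assms in simp_all)
qed

lemma arrow_object_factor2:
  assumes ar: "is_arrow_object C A P d0 d1 l" and z: "z \<in> hom C Y P" "z' \<in> hom C Y P"
    and "s \<in> cells C (cmp C d0 z) (cmp C d0 z')" "t \<in> cells C (cmp C d1 z) (cmp C d1 z')"
    and "vcmp C (rwh C l z') s = vcmp C t (rwh C l z)"
  obtains r where "r \<in> cells C z z'" "lwh C d0 r = s" "lwh C d1 r = t"
  using arrow_object_universal(2)[OF ar hom_obs(1)[OF z(1)] z assms(4-6)] that by blast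

lemma arrow_object_cancel2:
  assumes ar: "is_arrow_object C A P d0 d1 l" and z: "z \<in> hom C Y P"
    and r: "r \<in> cells C z z'" "r' \<in> cells C z z'" and "lwh C d0 r = lwh C d0 r'" "lwh C d1 r = lwh C d1 r'"
  shows "r = r'"
proof -
  note P = arrow_objectD[OF ar]
  have z': "z' \<in> hom C Y P" using cells_tgt_in_hom r(1) z by blast
  have "lwh C d0 r \<in> cells C (cmp C d0 z) (cmp C d0 z')" "lwh C d1 r \<in> cells C (cmp C d1 z) (cmp C d1 z')"
    using lwh_in_cells[OF r(1) z] P by blast+
  moreover have "vcmp C (rwh C l z') (lwh C d0 r) = vcmp C (lwh C d1 r) (rwh C l z)"
    using whisker_naturality[OF P(4,2) r(1) z] .
  ultimately show ?thesis
    by (rule ex1_unique[OF arrow_object_universal(2)[OF ar hom_obs(1)[OF z] z z']]) (use assms in simp_all)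
qed

end

lemma arrow_object_exists: "finitely_complete C \<Longrightarrow> A \<in> Ob C \<Longrightarrow> \<exists>P d0 d1 l. is_arrow_object C A P d0 d1 l"
  unfolding finitely_complete_def by blast

lemma product_exists: "finitely_complete C \<Longrightarrow> A \<in> Ob C \<Longrightarrow> B \<in> Ob C \<Longrightarrow> \<exists>P p q. is_product C A B P p q"
  unfolding finitely_complete_def by blast

lemma equalizer_exists:
  "finitely_complete C \<Longrightarrow> f \<in> hom C A B \<Longrightarrow> g \<in> hom C A B \<Longrightarrow> \<exists>E m. is_equalizer C f g E m"
  unfolding finitely_complete_def hom_def by auto

section \<open>Construction of \<open>F\<^sub>b\<^sub>o\<^sub>f\<close>-kernels\<close>

text \<open>K classifies pairs of 1-cells z1, z2 into P with h z1 = h z2 and k z1 = k z2 (and likewise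
  pairs of 2-cells); it is built as two successive equalizers inside P \<times> P, with projections k1, k2.\<close>

locale joint_kernel_pair_construction = strict_two_category C
  for C :: "('o, 'm, 'c) two_cat" +
  fixes P A Q E1 K :: 'o and h k p q m1 m2 :: 'm
  assumes h: "h \<in> hom C P A" and k: "k \<in> hom C P A"
    and product: "is_product C P P Q p q"
    and first_equalizer: "is_equalizer C (cmp C h p) (cmp C h q) E1 m1"
    and second_equalizer: "is_equalizer C (cmp C k (cmp C p m1)) (cmp C k (cmp C q m1)) K m2"
begin

definition "k1 = cmp C p (cmp C m1 m2)"
definition "k2 = cmp C q (cmp C m1 m2)"

lemma hp: "cmp C h p \<in> hom C Q A" and hq: "cmp C h q \<in> hom C Q A"
  using cmp_in_hom[OF productD(2)[OF product] h] cmp_in_hom[OF productD(3)[OF product] h] by blast+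

lemma kpm1: "cmp C k (cmp C p m1) \<in> hom C E1 A" and kqm1: "cmp C k (cmp C q m1) \<in> hom C E1 A"
  using cmp_in_hom[OF cmp_in_hom[OF equalizerD(2)[OF first_equalizer hp]] k] productD(2,3)[OF product]
  by blast+

lemmas kernel_pair_typing = homD[OF h] homD[OF k] homD[OF productD(2)[OF product]] homD[OF productD(3)[OF product]]
  homD[OF equalizerD(2)[OF first_equalizer hp]] homD[OF equalizerD(2)[OF second_equalizer kpm1]]

lemma kernel_pair_in_hom: "K \<in> Ob C" "k1 \<in> hom C K P" "k2 \<in> hom C K P"
  using equalizerD(1,2)[OF second_equalizer kpm1] by (auto simp: k1_def k2_def kernel_pair_typing normalize_composites hom_def)

lemma kernel_pair_commutes: "cmp C h k1 = cmp C h k2" "cmp C k k1 = cmp C k k2"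
proof -
  note W = homD[OF equalizerD(2)[OF second_equalizer kpm1]]
  show "cmp C h k1 = cmp C h k2"
    using arg_cong[OF equalizerD(3)[OF first_equalizer hp], of "\<lambda>g. cmp C g m2"]
    by (simp add: k1_def k2_def kernel_pair_typing W normalize_composites)
  show "cmp C k k1 = cmp C k k2"
    using equalizerD(3)[OF second_equalizer kpm1] by (simp add: k1_def k2_def kernel_pair_typing W normalize_composites)
qed

lemma kernel_pair_commutes_Mor:
  assumes "x \<in> Mor C" "cod1 C x = K"
  shows "cmp C h (cmp C k2 x) = cmp C h (cmp C k1 x)" "cmp C k (cmp C k2 x) = cmp C k (cmp C k1 x)"
  using assms kernel_pair_commutes kernel_pair_in_hom
  by (metis cmp_assoc_Mor homD kernel_pair_typing)+

lemma kernel_pair_commutes_Cell: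
  assumes "r \<in> Cell C" "cod1 C (src2 C r) = K"
  shows "lwh C h (lwh C k2 r) = lwh C h (lwh C k1 r)" "lwh C k (lwh C k2 r) = lwh C k (lwh C k1 r)"
  using assms kernel_pair_commutes kernel_pair_in_hom
  by (metis lwh_cmp_Mor homD kernel_pair_typing)+

lemma kernel_pair_factor:
  assumes z1: "z1 \<in> hom C Y P" and z2: "z2 \<in> hom C Y P"
    and hz: "cmp C h z1 = cmp C h z2" and kz: "cmp C k z1 = cmp C k z2"
  obtains z where "z \<in> hom C Y K" "cmp C k1 z = z1" "cmp C k2 z = z2"
proof -
  obtain w where w: "w \<in> hom C Y Q" "cmp C p w = z1" "cmp C q w = z2"
    using product_pair[OF product z1 z2] .
  note W = homD[OF z1] homD[OF z2] homD[OF w(1)] w(2,3)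
  have "cmp C (cmp C h p) w = cmp C (cmp C h q) w"
    using hz by (simp add: kernel_pair_typing W normalize_composites)
  then obtain x where x: "x \<in> hom C Y E1" "cmp C m1 x = w"
    using equalizer_factor[OF first_equalizer hp w(1)] by blast
  note W = W homD[OF x(1)] x(2)
  have "cmp C (cmp C k (cmp C p m1)) x = cmp C (cmp C k (cmp C q m1)) x"
    using kz by (simp add: kernel_pair_typing W normalize_composites)
  then obtain z where z: "z \<in> hom C Y K" "cmp C m2 z = x"
    using equalizer_factor[OF second_equalizer kpm1 x(1)] by blast
  note W = W homD[OF z(1)] z(2)
  from z(1) show thesis by (rule that) (simp_all add: k1_def k2_def kernel_pair_typing W normalize_composites)
qed

lemma kernel_pair_cancel:
  assumes z: "z \<in> hom C Y K" "z' \<in> hom C Y K" and "cmp C k1 z = cmp C k1 z'" "cmp C k2 z = cmp C k2 z'"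
  shows "z = z'"
proof -
  note W = homD[OF z(1)] homD[OF z(2)]
  have "cmp C m1 (cmp C m2 z) = cmp C m1 (cmp C m2 z')"
    by (rule product_cancel[OF product, where Y=Y])
      (use assms in \<open>simp_all add: k1_def k2_def kernel_pair_typing W normalize_composites hom_def\<close>)
  moreover have "cmp C m2 z \<in> hom C Y E1" "cmp C m2 z' \<in> hom C Y E1"
    by (simp_all add: kernel_pair_typing W normalize_composites hom_def)
  ultimately have "cmp C m2 z = cmp C m2 z'"
    using equalizer_cancel[OF first_equalizer hp hq] by blast
  then show "z = z'"
    by (rule equalizer_cancel[OF second_equalizer kpm1 kqm1 z])
qed

lemma kernel_pair_factor2:
  assumes z: "z \<in> hom C Y K" "z' \<in> hom C Y K"
    and r1: "r1 \<in> cells C (cmp C k1 z) (cmp C k1 z')" and r2: "r2 \<in> cells C (cmp C k2 z) (cmp C k2 z')"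
    and hr: "lwh C h r1 = lwh C h r2" and kr: "lwh C k r1 = lwh C k r2"
  obtains r where "r \<in> cells C z z'" "lwh C k1 r = r1" "lwh C k2 r = r2"
proof -
  note W = homD[OF z(1)] homD[OF z(2)] cellsD[OF r1] cellsD[OF r2]
  have m12z: "cmp C m1 (cmp C m2 z) \<in> hom C Y Q" "cmp C m1 (cmp C m2 z') \<in> hom C Y Q"
    by (simp_all add: kernel_pair_typing W normalize_composites hom_def)
  have "r1 \<in> cells C (cmp C p (cmp C m1 (cmp C m2 z))) (cmp C p (cmp C m1 (cmp C m2 z')))"
    "r2 \<in> cells C (cmp C q (cmp C m1 (cmp C m2 z))) (cmp C q (cmp C m1 (cmp C m2 z')))"
    by (simp_all add: k1_def k2_def kernel_pair_typing W normalize_composites cells_def)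
  then obtain w where w: "w \<in> cells C (cmp C m1 (cmp C m2 z)) (cmp C m1 (cmp C m2 z'))"
      "lwh C p w = r1" "lwh C q w = r2"
    by (rule product_pair2[OF product m12z])
  note W = W cellsD[OF w(1)] w(2,3)
  have m2z: "cmp C m2 z \<in> hom C Y E1" "cmp C m2 z' \<in> hom C Y E1"
    by (simp_all add: kernel_pair_typing W normalize_composites hom_def)
  have "lwh C (cmp C h p) w = lwh C (cmp C h q) w"
    using hr by (simp add: kernel_pair_typing W normalize_composites)
  then obtain x where x: "x \<in> cells C (cmp C m2 z) (cmp C m2 z')" "lwh C m1 x = w"
    by (rule equalizer_factor2[OF first_equalizer m2z w(1)])
  note W = W cellsD[OF x(1)] x(2)
  have "lwh C (cmp C k (cmp C p m1)) x = lwh C (cmp C k (cmp C q m1)) x"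
    using kr by (simp add: kernel_pair_typing W normalize_composites)
  then obtain r where r: "r \<in> cells C z z'" "lwh C m2 r = x"
    using equalizer_factor2[OF second_equalizer z] x(1) by blast
  note W = W cellsD[OF r(1)] r(2)
  from r(1) show thesis by (rule that) (simp_all add: k1_def k2_def kernel_pair_typing W normalize_composites)
qed

lemma kernel_pair_cancel2:
  assumes z: "z \<in> hom C Y K" and r: "r \<in> cells C z z'" "r' \<in> cells C z z'"
    and k1r: "lwh C k1 r = lwh C k1 r'" and k2r: "lwh C k2 r = lwh C k2 r'"
  shows "r = r'"
proof -
  have z': "z' \<in> hom C Y K" using cells_tgt_in_hom r(1) z by blast
  note W = homD[OF z] homD[OF z'] cellsD[OF r(1)] cellsD[OF r(2)]
  have m2z: "cmp C m2 z \<in> hom C Y E1" by (simp add: kernel_pair_typing W hom_def normalize_composites)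
  have m2r: "lwh C m2 r \<in> cells C (cmp C m2 z) (cmp C m2 z')" "lwh C m2 r' \<in> cells C (cmp C m2 z) (cmp C m2 z')"
    by (simp_all add: kernel_pair_typing W cells_def normalize_composites)
  have "cmp C m1 (cmp C m2 z) \<in> hom C Y Q" by (simp add: kernel_pair_typing W hom_def normalize_composites)
  moreover have "lwh C m1 (lwh C m2 r) \<in> cells C (cmp C m1 (cmp C m2 z)) (cmp C m1 (cmp C m2 z'))"
    "lwh C m1 (lwh C m2 r') \<in> cells C (cmp C m1 (cmp C m2 z)) (cmp C m1 (cmp C m2 z'))"
    by (simp_all add: kernel_pair_typing W cells_def normalize_composites)
  moreover have "lwh C p (lwh C m1 (lwh C m2 r)) = lwh C p (lwh C m1 (lwh C m2 r'))"
    "lwh C q (lwh C m1 (lwh C m2 r)) = lwh C q (lwh C m1 (lwh C m2 r'))"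
    using k1r k2r by (simp_all add: k1_def k2_def kernel_pair_typing W normalize_composites)
  ultimately have "lwh C m1 (lwh C m2 r) = lwh C m1 (lwh C m2 r')"
    by (rule product_cancel2[OF product])
  then have "lwh C m2 r = lwh C m2 r'"
    by (rule equalizer_cancel2[OF first_equalizer hp hq m2z m2r])
  then show "r = r'"
    by (rule equalizer_cancel2[OF second_equalizer kpm1 kqm1 z r])
qed

end

text \<open>When (d0, d1, l) is the arrow object of A, a pair of 1-cells into P with common boundary is a
  pair of parallel 2-cells, so K becomes the object of parallel pairs \<alpha>, \<beta> : u \<Rightarrow> v.\<close>

locale cell_pair_construction =
  joint_kernel_pair_construction C P A Q E1 K d0 d1 p q m1 m2
  for C :: "('o, 'm, 'c) two_cat" and P A Q E1 K d0 d1 p q m1 m2 +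
  fixes l :: 'c
  assumes arrow_object: "is_arrow_object C A P d0 d1 l"
begin

definition "u = cmp C d0 k1"
definition "v = cmp C d1 k1"
definition "\<alpha> = rwh C l k1"
definition "\<beta> = rwh C l k2"

lemma cell_pair_in_hom: "u \<in> hom C K A" "v \<in> hom C K A" "\<alpha> \<in> cells C u v" "\<beta> \<in> cells C u v"
proof -
  note l = arrow_objectD(2-4)[OF arrow_object]
  show "u \<in> hom C K A" "v \<in> hom C K A"
    unfolding u_def v_def using cmp_in_hom[OF kernel_pair_in_hom(2)] l by blast+
  show "\<alpha> \<in> cells C u v" "\<beta> \<in> cells C u v"
    unfolding u_def v_def \<alpha>_def \<beta>_def using rwh_in_cells[OF l(3,1) kernel_pair_in_hom(2)]
      rwh_in_cells[OF l(3,1) kernel_pair_in_hom(3)] kernel_pair_commutes by simp_all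
qed

lemmas cell_pair_typing = kernel_pair_typing homD[OF kernel_pair_in_hom(2)] homD[OF kernel_pair_in_hom(3)]
  cellsD[OF arrow_objectD(4)[OF arrow_object]]

lemma cell_pair_factor:
  assumes x: "x \<in> hom C Y A" and g: "g \<in> cells C x y" and d: "d \<in> cells C x y"
  obtains z where "z \<in> hom C Y K" "cmp C u z = x" "cmp C v z = y" "rwh C \<alpha> z = g" "rwh C \<beta> z = d"
proof -
  obtain z1 where z1: "z1 \<in> hom C Y P" "cmp C d0 z1 = x" "cmp C d1 z1 = y" "rwh C l z1 = g"
    using arrow_object_factor[OF arrow_object g x] .
  obtain z2 where z2: "z2 \<in> hom C Y P" "cmp C d0 z2 = x" "cmp C d1 z2 = y" "rwh C l z2 = d"
    using arrow_object_factor[OF arrow_object d x] .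
  have "cmp C d0 z1 = cmp C d0 z2" "cmp C d1 z1 = cmp C d1 z2" using z1 z2 by simp_all
  then obtain z where z: "z \<in> hom C Y K" "cmp C k1 z = z1" "cmp C k2 z = z2"
    using kernel_pair_factor[OF z1(1) z2(1)] by blast
  note Z = homD[OF z(1)] z(2,3)
  from z(1) show thesis
    by (rule that) (use z1 z2 in \<open>simp_all add: u_def v_def \<alpha>_def \<beta>_def cell_pair_typing Z normalize_composites\<close>)
qed

lemma cell_pair_cancel:
  assumes z: "z \<in> hom C Y K" "z' \<in> hom C Y K"
    and eqs: "cmp C u z = cmp C u z'" "cmp C v z = cmp C v z'" "rwh C \<alpha> z = rwh C \<alpha> z'" "rwh C \<beta> z = rwh C \<beta> z'"
  shows "z = z'"
proof (rule kernel_pair_cancel[OF z])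
  note Z = homD[OF z(1)] homD[OF z(2)]
  have kz: "cmp C k1 z \<in> hom C Y P" "cmp C k1 z' \<in> hom C Y P" "cmp C k2 z \<in> hom C Y P" "cmp C k2 z' \<in> hom C Y P"
    using z cmp_in_hom kernel_pair_in_hom by blast+
  have d01: "cmp C d0 (cmp C k1 z) = cmp C d0 (cmp C k1 z')" "cmp C d1 (cmp C k1 z) = cmp C d1 (cmp C k1 z')"
    and l12: "rwh C l (cmp C k1 z) = rwh C l (cmp C k1 z')" "rwh C l (cmp C k2 z) = rwh C l (cmp C k2 z')"
    using eqs by (simp_all add: u_def v_def \<alpha>_def \<beta>_def cell_pair_typing Z normalize_composites)
  from d01 l12(1) show "cmp C k1 z = cmp C k1 z'"
    by (rule arrow_object_cancel[OF arrow_object kz(1,2)])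
  have "cmp C d0 (cmp C k2 z) = cmp C d0 (cmp C k2 z')" "cmp C d1 (cmp C k2 z) = cmp C d1 (cmp C k2 z')"
    using d01 by (simp_all add: kernel_pair_commutes_Mor Z)
  then show "cmp C k2 z = cmp C k2 z'"
    using l12(2) by (rule arrow_object_cancel[OF arrow_object kz(3,4)])
qed

lemma cell_pair_factor2:
  assumes z: "z \<in> hom C Y K" "z' \<in> hom C Y K"
    and s: "s \<in> cells C (cmp C u z) (cmp C u z')" and t: "t \<in> cells C (cmp C v z) (cmp C v z')"
    and c\<alpha>: "vcmp C (rwh C \<alpha> z') s = vcmp C t (rwh C \<alpha> z)"
    and c\<beta>: "vcmp C (rwh C \<beta> z') s = vcmp C t (rwh C \<beta> z)"
  obtains r where "r \<in> cells C z z'" "lwh C u r = s" "lwh C v r = t"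
proof -
  note Z = homD[OF z(1)] homD[OF z(2)]
  have kz: "cmp C k1 z \<in> hom C Y P" "cmp C k1 z' \<in> hom C Y P" "cmp C k2 z \<in> hom C Y P" "cmp C k2 z' \<in> hom C Y P"
    using z cmp_in_hom kernel_pair_in_hom by blast+
  have k2z: "cmp C d0 (cmp C k2 z) = cmp C d0 (cmp C k1 z)" "cmp C d0 (cmp C k2 z') = cmp C d0 (cmp C k1 z')"
    "cmp C d1 (cmp C k2 z) = cmp C d1 (cmp C k1 z)" "cmp C d1 (cmp C k2 z') = cmp C d1 (cmp C k1 z')"
    using kernel_pair_commutes_Mor Z by simp_all
  have s1: "s \<in> cells C (cmp C d0 (cmp C k1 z)) (cmp C d0 (cmp C k1 z'))"
    using s by (simp add: u_def cell_pair_typing Z normalize_composites)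
  then have s2: "s \<in> cells C (cmp C d0 (cmp C k2 z)) (cmp C d0 (cmp C k2 z'))"
    by (simp only: k2z)
  have t1: "t \<in> cells C (cmp C d1 (cmp C k1 z)) (cmp C d1 (cmp C k1 z'))"
    using t by (simp add: v_def cell_pair_typing Z normalize_composites)
  then have t2: "t \<in> cells C (cmp C d1 (cmp C k2 z)) (cmp C d1 (cmp C k2 z'))"
    by (simp only: k2z)
  have c1: "vcmp C (rwh C l (cmp C k1 z')) s = vcmp C t (rwh C l (cmp C k1 z))"
    using c\<alpha> by (simp add: \<alpha>_def cell_pair_typing Z normalize_composites)
  have c2: "vcmp C (rwh C l (cmp C k2 z')) s = vcmp C t (rwh C l (cmp C k2 z))"
    using c\<beta> by (simp add: \<beta>_def cell_pair_typing Z normalize_composites)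
  obtain r1 where r1: "r1 \<in> cells C (cmp C k1 z) (cmp C k1 z')" "lwh C d0 r1 = s" "lwh C d1 r1 = t"
    using arrow_object_factor2[OF arrow_object kz(1,2) s1 t1 c1] .
  obtain r2 where r2: "r2 \<in> cells C (cmp C k2 z) (cmp C k2 z')" "lwh C d0 r2 = s" "lwh C d1 r2 = t"
    using arrow_object_factor2[OF arrow_object kz(3,4) s2 t2 c2] .
  have "lwh C d0 r1 = lwh C d0 r2" "lwh C d1 r1 = lwh C d1 r2" using r1 r2 by simp_all
  then obtain r where r: "r \<in> cells C z z'" "lwh C k1 r = r1" "lwh C k2 r = r2"
    using kernel_pair_factor2[OF z r1(1) r2(1)] by blast
  note R = cellsD[OF r(1)] r(2,3)
  from r(1) show thesis
    by (rule that) (use r1 r2 in \<open>simp_all add: u_def v_def cell_pair_typing Z R normalize_composites\<close>)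
qed

lemma cell_pair_cancel2:
  assumes z: "z \<in> hom C Y K" and r: "r \<in> cells C z z'" "r' \<in> cells C z z'"
    and eqs: "lwh C u r = lwh C u r'" "lwh C v r = lwh C v r'"
  shows "r = r'"
proof (rule kernel_pair_cancel2[OF z r])
  have z': "z' \<in> hom C Y K" using cells_tgt_in_hom r(1) z by blast
  note Z = homD[OF z] homD[OF z'] cellsD[OF r(1)] cellsD[OF r(2)]
  have kz: "cmp C k1 z \<in> hom C Y P" "cmp C k2 z \<in> hom C Y P"
    using z cmp_in_hom kernel_pair_in_hom by blast+
  have kr: "lwh C k1 r \<in> cells C (cmp C k1 z) (cmp C k1 z')" "lwh C k1 r' \<in> cells C (cmp C k1 z) (cmp C k1 z')"
    "lwh C k2 r \<in> cells C (cmp C k2 z) (cmp C k2 z')" "lwh C k2 r' \<in> cells C (cmp C k2 z) (cmp C k2 z')"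
    using lwh_in_cells[OF r(1) z] lwh_in_cells[OF r(2) z] kernel_pair_in_hom by blast+
  have d01: "lwh C d0 (lwh C k1 r) = lwh C d0 (lwh C k1 r')" "lwh C d1 (lwh C k1 r) = lwh C d1 (lwh C k1 r')"
    using eqs by (simp_all add: u_def v_def cell_pair_typing Z normalize_composites)
  show "lwh C k1 r = lwh C k1 r'"
    using arrow_object_cancel2[OF arrow_object kz(1) kr(1,2) d01] .
  have k2r: "lwh C d0 (lwh C k2 r) = lwh C d0 (lwh C k1 r)" "lwh C d0 (lwh C k2 r') = lwh C d0 (lwh C k1 r')"
    "lwh C d1 (lwh C k2 r) = lwh C d1 (lwh C k1 r)" "lwh C d1 (lwh C k2 r') = lwh C d1 (lwh C k1 r')"
    using kernel_pair_commutes_Cell Z by simp_all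
  have "lwh C d0 (lwh C k2 r) = lwh C d0 (lwh C k2 r')" "lwh C d1 (lwh C k2 r) = lwh C d1 (lwh C k2 r')"
    using d01 by (simp_all only: k2r)
  then show "lwh C k2 r = lwh C k2 r'"
    using arrow_object_cancel2[OF arrow_object kz(2) kr(3,4)] by blast
qed

end

text \<open>w1 and w2 classify the 2-cells f \<alpha> and f \<beta> in the arrow object of B, so their equalizer
  cuts out the parallel pairs identified by f.\<close>

locale bof_kernel_construction =
  cell_pair_construction C P A Q E1 K d0 d1 p q m1 m2 l
  for C :: "('o, 'm, 'c) two_cat" and P A Q E1 K d0 d1 p q m1 m2 l +
  fixes B PB E :: 'o and f D0 D1 w1 w2 m :: 'm and L :: 'c
  assumes f: "f \<in> hom C A B"
    and arrow_object_B: "is_arrow_object C B PB D0 D1 L"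
    and w1: "w1 \<in> hom C K PB" "cmp C D0 w1 = cmp C f u" "cmp C D1 w1 = cmp C f v"
      "rwh C L w1 = lwh C f \<alpha>"
    and w2: "w2 \<in> hom C K PB" "cmp C D0 w2 = cmp C f u" "cmp C D1 w2 = cmp C f v"
      "rwh C L w2 = lwh C f \<beta>"
    and equalizer: "is_equalizer C w1 w2 E m"
begin

lemma m_in_hom: "E \<in> Ob C" "m \<in> hom C E K"
  using equalizerD(1,2)[OF equalizer w1(1)] by blast+

lemma equalizer_commutes: "x \<in> hom C Y E \<Longrightarrow> cmp C w2 (cmp C m x) = cmp C w1 (cmp C m x)"
  using cmp_assoc[OF _ m_in_hom(2) w1(1)] cmp_assoc[OF _ m_in_hom(2) w2(1)]
    equalizerD(3)[OF equalizer w1(1)] by metis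

lemmas bof_kernel_typing = homD[OF f] homD[OF arrow_objectD(2)[OF arrow_object_B]]
  homD[OF arrow_objectD(3)[OF arrow_object_B]] cellsD[OF arrow_objectD(4)[OF arrow_object_B]]
  homD[OF w1(1)] homD[OF w2(1)] homD[OF m_in_hom(2)]
  homD[OF cell_pair_in_hom(1)] homD[OF cell_pair_in_hom(2)]
  cellsD[OF cell_pair_in_hom(3)] cellsD[OF cell_pair_in_hom(4)]

lemma classifying_maps_Mor:
  assumes "x \<in> Mor C" "cod1 C x = K"
  shows "cmp C D0 (cmp C w1 x) = cmp C f (cmp C u x)" "cmp C D1 (cmp C w1 x) = cmp C f (cmp C v x)"
    "cmp C D0 (cmp C w2 x) = cmp C f (cmp C u x)" "cmp C D1 (cmp C w2 x) = cmp C f (cmp C v x)"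
    "rwh C L (cmp C w1 x) = lwh C f (rwh C \<alpha> x)" "rwh C L (cmp C w2 x) = lwh C f (rwh C \<beta> x)"
  using assms arg_cong[OF w1(2), of "\<lambda>g. cmp C g x"] arg_cong[OF w1(3), of "\<lambda>g. cmp C g x"]
    arg_cong[OF w2(2), of "\<lambda>g. cmp C g x"] arg_cong[OF w2(3), of "\<lambda>g. cmp C g x"]
    arg_cong[OF w1(4), of "\<lambda>s. rwh C s x"] arg_cong[OF w2(4), of "\<lambda>s. rwh C s x"]
  by (simp_all add: bof_kernel_typing normalize_composites)

lemma classifying_maps_Cell:
  assumes "\<rho> \<in> Cell C" "cod1 C (src2 C \<rho>) = K"
  shows "lwh C D0 (lwh C w1 \<rho>) = lwh C f (lwh C u \<rho>)" "lwh C D1 (lwh C w1 \<rho>) = lwh C f (lwh C v \<rho>)"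
    "lwh C D0 (lwh C w2 \<rho>) = lwh C f (lwh C u \<rho>)" "lwh C D1 (lwh C w2 \<rho>) = lwh C f (lwh C v \<rho>)"
  using assms arg_cong[OF w1(2), of "\<lambda>g. lwh C g \<rho>"] arg_cong[OF w1(3), of "\<lambda>g. lwh C g \<rho>"]
    arg_cong[OF w2(2), of "\<lambda>g. lwh C g \<rho>"] arg_cong[OF w2(3), of "\<lambda>g. lwh C g \<rho>"]
  by (simp_all add: bof_kernel_typing normalize_composites)

lemma bof_kernel_factor:
  assumes x: "x \<in> hom C Y A" and g: "g \<in> cells C x y" and d: "d \<in> cells C x y"
    and fgd: "lwh C f g = lwh C f d"
  obtains e where "e \<in> hom C Y E" "cmp C (cmp C u m) e = x" "cmp C (cmp C v m) e = y"
    "rwh C (rwh C \<alpha> m) e = g" "rwh C (rwh C \<beta> m) e = d"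
proof -
  obtain z where z: "z \<in> hom C Y K" "cmp C u z = x" "cmp C v z = y" "rwh C \<alpha> z = g" "rwh C \<beta> z = d"
    using cell_pair_factor[OF x g d] .
  note Z = homD[OF z(1)] z(2-5)
  have wz: "cmp C w1 z \<in> hom C Y PB" "cmp C w2 z \<in> hom C Y PB"
    using cmp_in_hom[OF z(1)] w1(1) w2(1) by blast+
  have "cmp C D0 (cmp C w1 z) = cmp C D0 (cmp C w2 z)" "cmp C D1 (cmp C w1 z) = cmp C D1 (cmp C w2 z)"
    "rwh C L (cmp C w1 z) = rwh C L (cmp C w2 z)"
    using fgd by (simp_all add: classifying_maps_Mor Z)
  then have "cmp C w1 z = cmp C w2 z"
    using arrow_object_cancel[OF arrow_object_B wz] by blast
  then obtain e where e: "e \<in> hom C Y E" "cmp C m e = z"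
    using equalizer_factor[OF equalizer w1(1) z(1)] by blast
  note Z = Z homD[OF e(1)] e(2)
  from e(1) show thesis
    by (rule that) (simp_all add: bof_kernel_typing Z normalize_composites)
qed

lemma bof_kernel_cancel:
  assumes z: "z \<in> hom C Y E" "z' \<in> hom C Y E"
    and eqs: "cmp C (cmp C u m) z = cmp C (cmp C u m) z'" "cmp C (cmp C v m) z = cmp C (cmp C v m) z'"
      "rwh C (rwh C \<alpha> m) z = rwh C (rwh C \<alpha> m) z'" "rwh C (rwh C \<beta> m) z = rwh C (rwh C \<beta> m) z'"
  shows "z = z'"
proof -
  note Z = homD[OF z(1)] homD[OF z(2)]
  have mz: "cmp C m z \<in> hom C Y K" "cmp C m z' \<in> hom C Y K"
    using z cmp_in_hom m_in_hom(2) by blast+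
  have "cmp C u (cmp C m z) = cmp C u (cmp C m z')" "cmp C v (cmp C m z) = cmp C v (cmp C m z')"
    "rwh C \<alpha> (cmp C m z) = rwh C \<alpha> (cmp C m z')" "rwh C \<beta> (cmp C m z) = rwh C \<beta> (cmp C m z')"
    using eqs by (simp_all add: bof_kernel_typing Z normalize_composites)
  then have "cmp C m z = cmp C m z'"
    using cell_pair_cancel[OF mz] by blast
  then show "z = z'"
    using equalizer_cancel[OF equalizer w1(1) w2(1) z] by blast
qed

lemma bof_kernel_factor2:
  assumes z: "z \<in> hom C Y E" "z' \<in> hom C Y E"
    and s: "s \<in> cells C (cmp C (cmp C u m) z) (cmp C (cmp C u m) z')"
    and t: "t \<in> cells C (cmp C (cmp C v m) z) (cmp C (cmp C v m) z')"
    and c\<alpha>: "vcmp C (rwh C (rwh C \<alpha> m) z') s = vcmp C t (rwh C (rwh C \<alpha> m) z)"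
    and c\<beta>: "vcmp C (rwh C (rwh C \<beta> m) z') s = vcmp C t (rwh C (rwh C \<beta> m) z)"
  obtains r where "r \<in> cells C z z'" "lwh C (cmp C u m) r = s" "lwh C (cmp C v m) r = t"
proof -
  note Z = homD[OF z(1)] homD[OF z(2)]
  have mz: "cmp C m z \<in> hom C Y K" "cmp C m z' \<in> hom C Y K"
    using z cmp_in_hom m_in_hom(2) by blast+
  have "s \<in> cells C (cmp C u (cmp C m z)) (cmp C u (cmp C m z'))"
    "t \<in> cells C (cmp C v (cmp C m z)) (cmp C v (cmp C m z'))"
    "vcmp C (rwh C \<alpha> (cmp C m z')) s = vcmp C t (rwh C \<alpha> (cmp C m z))"
    "vcmp C (rwh C \<beta> (cmp C m z')) s = vcmp C t (rwh C \<beta> (cmp C m z))"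
    using s t c\<alpha> c\<beta> by (simp_all add: bof_kernel_typing Z normalize_composites)
  then obtain \<rho> where \<rho>: "\<rho> \<in> cells C (cmp C m z) (cmp C m z')" "lwh C u \<rho> = s" "lwh C v \<rho> = t"
    using cell_pair_factor2[OF mz] by blast
  note R = cellsD[OF \<rho>(1)]
  have w\<rho>: "lwh C w1 \<rho> \<in> cells C (cmp C w1 (cmp C m z)) (cmp C w1 (cmp C m z'))"
    "lwh C w2 \<rho> \<in> cells C (cmp C w1 (cmp C m z)) (cmp C w1 (cmp C m z'))"
    using lwh_in_cells[OF \<rho>(1) mz(1) w1(1)] lwh_in_cells[OF \<rho>(1) mz(1) w2(1)]
    by (simp_all add: equalizer_commutes[OF z(1)] equalizer_commutes[OF z(2)])
  have w1z: "cmp C w1 (cmp C m z) \<in> hom C Y PB" using cmp_in_hom[OF mz(1) w1(1)] .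
  have "lwh C D0 (lwh C w1 \<rho>) = lwh C D0 (lwh C w2 \<rho>)" "lwh C D1 (lwh C w1 \<rho>) = lwh C D1 (lwh C w2 \<rho>)"
    by (simp_all add: classifying_maps_Cell bof_kernel_typing Z R normalize_composites)
  then have "lwh C w1 \<rho> = lwh C w2 \<rho>"
    using arrow_object_cancel2[OF arrow_object_B w1z w\<rho>] by blast
  then obtain r where r: "r \<in> cells C z z'" "lwh C m r = \<rho>"
    using equalizer_factor2[OF equalizer z \<rho>(1)] by blast
  note R = R cellsD[OF r(1)] r(2)
  from r(1) show thesis
    by (rule that) (use \<rho> in \<open>simp_all add: bof_kernel_typing Z R normalize_composites\<close>)
qed

lemma bof_kernel_cancel2:
  assumes z: "z \<in> hom C Y E" and r: "r \<in> cells C z z'" "r' \<in> cells C z z'"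
    and eqs: "lwh C (cmp C u m) r = lwh C (cmp C u m) r'" "lwh C (cmp C v m) r = lwh C (cmp C v m) r'"
  shows "r = r'"
proof -
  have z': "z' \<in> hom C Y E" using cells_tgt_in_hom r(1) z by blast
  note Z = homD[OF z] homD[OF z'] cellsD[OF r(1)] cellsD[OF r(2)]
  have mz: "cmp C m z \<in> hom C Y K" using cmp_in_hom[OF z m_in_hom(2)] .
  have mr: "lwh C m r \<in> cells C (cmp C m z) (cmp C m z')" "lwh C m r' \<in> cells C (cmp C m z) (cmp C m z')"
    using lwh_in_cells[OF r(1) z m_in_hom(2)] lwh_in_cells[OF r(2) z m_in_hom(2)] .
  have "lwh C u (lwh C m r) = lwh C u (lwh C m r')" "lwh C v (lwh C m r) = lwh C v (lwh C m r')"
    using eqs by (simp_all add: bof_kernel_typing Z normalize_composites)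
  then have "lwh C m r = lwh C m r'"
    using cell_pair_cancel2[OF mz mr] by blast
  then show "r = r'"
    using equalizer_cancel2[OF equalizer w1(1) w2(1) z r] by blast
qed

lemma bof_kernel: "is_bof_kernel C f E (cmp C u m) (cmp C v m) (rwh C \<alpha> m) (rwh C \<beta> m)"
proof -
  note m = m_in_hom(2) and A = homD(2)[OF f]
  have "cmp C u m \<in> hom C E (dom1 C f)" "cmp C v m \<in> hom C E (dom1 C f)"
    using cmp_in_hom[OF m] cell_pair_in_hom(1,2) A by blast+
  moreover have "rwh C \<alpha> m \<in> cells C (cmp C u m) (cmp C v m)" "rwh C \<beta> m \<in> cells C (cmp C u m) (cmp C v m)"
    using rwh_in_cells[OF _ cell_pair_in_hom(1) m] cell_pair_in_hom(3,4) by blast+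
  moreover have "lwh C f (rwh C \<alpha> m) = lwh C f (rwh C \<beta> m)"
    using classifying_maps_Mor(5,6)[OF homD(1,3)[OF m]] equalizerD(3)[OF equalizer w1(1)] by simp
  moreover have "\<forall>Y \<in> Ob C. \<forall>x \<in> hom C Y (dom1 C f). \<forall>y \<in> hom C Y (dom1 C f).
      \<forall>g \<in> cells C x y. \<forall>d \<in> cells C x y. lwh C f g = lwh C f d \<longrightarrow>
      (\<exists>!e. e \<in> hom C Y E \<and> cmp C (cmp C u m) e = x \<and> cmp C (cmp C v m) e = y \<and>
         rwh C (rwh C \<alpha> m) e = g \<and> rwh C (rwh C \<beta> m) e = d)"
  proof (intro ballI impI)
    fix Y x y g d assume x: "x \<in> hom C Y (dom1 C f)" and g: "g \<in> cells C x y" "d \<in> cells C x y"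
      and fgd: "lwh C f g = lwh C f d"
    obtain e where "e \<in> hom C Y E \<and> cmp C (cmp C u m) e = x \<and> cmp C (cmp C v m) e = y \<and>
        rwh C (rwh C \<alpha> m) e = g \<and> rwh C (rwh C \<beta> m) e = d"
      using bof_kernel_factor[OF x[unfolded A] g fgd] by blast
    moreover have "e' = e" if "e' \<in> hom C Y E \<and> cmp C (cmp C u m) e' = x \<and> cmp C (cmp C v m) e' = y \<and>
        rwh C (rwh C \<alpha> m) e' = g \<and> rwh C (rwh C \<beta> m) e' = d" for e'
      using that calculation by (intro bof_kernel_cancel[of e' Y e]) auto
    ultimately show "\<exists>!e. e \<in> hom C Y E \<and> cmp C (cmp C u m) e = x \<and> cmp C (cmp C v m) e = y \<and>
        rwh C (rwh C \<alpha> m) e = g \<and> rwh C (rwh C \<beta> m) e = d"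
      by blast
  qed
  moreover have "\<forall>Y \<in> Ob C. \<forall>z \<in> hom C Y E. \<forall>z' \<in> hom C Y E.
      \<forall>s \<in> cells C (cmp C (cmp C u m) z) (cmp C (cmp C u m) z').
      \<forall>t \<in> cells C (cmp C (cmp C v m) z) (cmp C (cmp C v m) z').
      vcmp C (rwh C (rwh C \<alpha> m) z') s = vcmp C t (rwh C (rwh C \<alpha> m) z) \<and>
      vcmp C (rwh C (rwh C \<beta> m) z') s = vcmp C t (rwh C (rwh C \<beta> m) z) \<longrightarrow>
      (\<exists>!r. r \<in> cells C z z' \<and> lwh C (cmp C u m) r = s \<and> lwh C (cmp C v m) r = t)"
  proof (intro ballI impI)
    fix Y z z' s t assume z: "z \<in> hom C Y E" "z' \<in> hom C Y E"
      and st: "s \<in> cells C (cmp C (cmp C u m) z) (cmp C (cmp C u m) z')"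
        "t \<in> cells C (cmp C (cmp C v m) z) (cmp C (cmp C v m) z')"
      and c: "vcmp C (rwh C (rwh C \<alpha> m) z') s = vcmp C t (rwh C (rwh C \<alpha> m) z) \<and>
        vcmp C (rwh C (rwh C \<beta> m) z') s = vcmp C t (rwh C (rwh C \<beta> m) z)"
    obtain r where "r \<in> cells C z z' \<and> lwh C (cmp C u m) r = s \<and> lwh C (cmp C v m) r = t"
      using bof_kernel_factor2[OF z st] c by blast
    moreover have "r' = r" if "r' \<in> cells C z z' \<and> lwh C (cmp C u m) r' = s \<and> lwh C (cmp C v m) r' = t" for r'
      using that calculation by (intro bof_kernel_cancel2[OF z(1), of r' z' r]) auto
    ultimately show "\<exists>!r. r \<in> cells C z z' \<and> lwh C (cmp C u m) r = s \<and> lwh C (cmp C v m) r = t"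
      by blast
  qed
  ultimately show ?thesis
    unfolding is_bof_kernel_def using homD(1)[OF f] m_in_hom(1) by (intro conjI)
qed

end

context strict_two_category
begin

lemma bof_kernel_exists:
  assumes fc: "finitely_complete C" and f: "f \<in> hom C A B"
  shows "\<exists>E u v a b. is_bof_kernel C f E u v a b"
proof -
  obtain P d0 d1 l where arrow_A: "is_arrow_object C A P d0 d1 l"
    using arrow_object_exists[OF fc hom_obs(1)[OF f]] by blast
  note d = arrow_objectD[OF arrow_A]
  obtain Q p q where product: "is_product C P P Q p q" using product_exists[OF fc d(1) d(1)] by blast
  note pq = productD(2,3)[OF product]
  obtain E1 m1 where eq1: "is_equalizer C (cmp C d0 p) (cmp C d0 q) E1 m1"
    using equalizer_exists[OF fc cmp_in_hom[OF pq(1) d(2)] cmp_in_hom[OF pq(2) d(2)]] by blast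
  note m1 = equalizerD(2)[OF eq1 cmp_in_hom[OF pq(1) d(2)]]
  obtain K m2 where eq2: "is_equalizer C (cmp C d1 (cmp C p m1)) (cmp C d1 (cmp C q m1)) K m2"
    using equalizer_exists[OF fc cmp_in_hom[OF cmp_in_hom[OF m1 pq(1)] d(3)]
        cmp_in_hom[OF cmp_in_hom[OF m1 pq(2)] d(3)]] by blast
  interpret cell_pair_construction C P A Q E1 K d0 d1 p q m1 m2 l
    by unfold_locales (use d(2,3) product eq1 eq2 arrow_A in auto)
  note uv = cell_pair_in_hom
  obtain PB D0 D1 L where arrow_B: "is_arrow_object C B PB D0 D1 L"
    using arrow_object_exists[OF fc hom_obs(2)[OF f]] by blast
  obtain w1 where w1: "w1 \<in> hom C K PB" "cmp C D0 w1 = cmp C f u" "cmp C D1 w1 = cmp C f v"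
    "rwh C L w1 = lwh C f \<alpha>"
    using arrow_object_factor[OF arrow_B lwh_in_cells[OF uv(3,1) f] cmp_in_hom[OF uv(1) f]] by blast
  obtain w2 where w2: "w2 \<in> hom C K PB" "cmp C D0 w2 = cmp C f u" "cmp C D1 w2 = cmp C f v"
    "rwh C L w2 = lwh C f \<beta>"
    using arrow_object_factor[OF arrow_B lwh_in_cells[OF uv(4,1) f] cmp_in_hom[OF uv(1) f]] by blast
  obtain E m where "is_equalizer C w1 w2 E m" using equalizer_exists[OF fc w1(1) w2(1)] by blast
  then interpret bof_kernel_construction C P A Q E1 K d0 d1 p q m1 m2 l B PB E f D0 D1 w1 w2 m L
    by unfold_locales (use f arrow_B w1 w2 in auto)
  show ?thesis using bof_kernel by blast
qed

lemma is_bof_kernel_factor: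
  assumes ker: "is_bof_kernel C f E u v a b" and x: "x \<in> hom C Y (dom1 C f)"
    and g: "g \<in> cells C x y" "d \<in> cells C x y" and fgd: "lwh C f g = lwh C f d"
  obtains z where "z \<in> hom C Y E" "rwh C a z = g" "rwh C b z = d"
proof -
  have "\<exists>!z. z \<in> hom C Y E \<and> cmp C u z = x \<and> cmp C v z = y \<and> rwh C a z = g \<and> rwh C b z = d"
    using ker hom_obs(1)[OF x] x cells_tgt_in_hom[OF g(1) x] g fgd unfolding is_bof_kernel_def by blast
  with that show thesis by blast
qed

end

section \<open>Coequifiers\<close>

context strict_two_category
begin

lemma coequifier_universal:
  "is_coequifier C a b Q e \<Longrightarrow> Y \<in> Ob C \<Longrightarrow> g \<in> hom C (cod1 C (src2 C a)) Y \<Longrightarrow>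
      lwh C g a = lwh C g b \<Longrightarrow> \<exists>!h. h \<in> hom C Q Y \<and> cmp C h e = g"
  "is_coequifier C a b Q e \<Longrightarrow> Y \<in> Ob C \<Longrightarrow> h \<in> hom C Q Y \<Longrightarrow> h' \<in> hom C Q Y \<Longrightarrow>
      t \<in> cells C (cmp C h e) (cmp C h' e) \<Longrightarrow> \<exists>!p. p \<in> cells C h h' \<and> rwh C p e = t"
  unfolding is_coequifier_def by blast+

lemma coequifierD:
  assumes "is_coequifier C a b Q e" "a \<in> cells C u v" "u \<in> hom C X2 X1"
  shows "Q \<in> Ob C" "e \<in> hom C X1 Q" "lwh C e a = lwh C e b" "b \<in> cells C u v"
proof -
  have "Q \<in> Ob C" "e \<in> hom C (cod1 C (src2 C a)) Q" "lwh C e a = lwh C e b"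
    and "b \<in> Cell C" "src2 C a = src2 C b" "tgt2 C a = tgt2 C b"
    using assms(1) unfolding is_coequifier_def by - (elim conjE, assumption)+
  then show "Q \<in> Ob C" "e \<in> hom C X1 Q" "lwh C e a = lwh C e b" "b \<in> cells C u v"
    using assms(2) homD(3)[OF assms(3)] by (simp_all add: cells_def)
qed

lemma coequifier_factor:
  assumes co: "is_coequifier C a b Q e" and a: "a \<in> cells C u v" and u: "u \<in> hom C X2 X1"
    and g: "g \<in> hom C X1 Y" and gab: "lwh C g a = lwh C g b"
  obtains h where "h \<in> hom C Q Y" "cmp C h e = g"
proof -
  have "g \<in> hom C (cod1 C (src2 C a)) Y" using g cellsD(2)[OF a] homD(3)[OF u] by simp
  from coequifier_universal(1)[OF co hom_obs(2)[OF g] this gab] that show thesis by blast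
qed

lemma coequifier_cancel:
  assumes co: "is_coequifier C a b Q e" and a: "a \<in> cells C u v" and u: "u \<in> hom C X2 X1"
    and h: "h \<in> hom C Q Y" "h' \<in> hom C Q Y" and he: "cmp C h e = cmp C h' e"
  shows "h = h'"
proof -
  note E = coequifierD[OF co a u]
  have "cmp C h e \<in> hom C (cod1 C (src2 C a)) Y"
    using cmp_in_hom[OF E(2) h(1)] cellsD(2)[OF a] homD(3)[OF u] by simp
  moreover have "lwh C (cmp C h e) a = lwh C (cmp C h e) b"
    using lwh_lwh[OF a u E(2) h(1)] lwh_lwh[OF E(4) u E(2) h(1)] E(3) by simp
  ultimately show ?thesis
    by (rule ex1_unique[OF coequifier_universal(1)[OF co hom_obs(2)[OF h(1)]]]) (use h he in simp_all)
qed

lemma coequifier_factor2: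
  assumes co: "is_coequifier C a b Q e" and h: "h \<in> hom C Q Y" "h' \<in> hom C Q Y"
    and t: "t \<in> cells C (cmp C h e) (cmp C h' e)"
  obtains p where "p \<in> cells C h h'" "rwh C p e = t"
  using coequifier_universal(2)[OF co hom_obs(2)[OF h(1)] h t] that by blast

lemma coequifier_cancel2:
  assumes co: "is_coequifier C a b Q e" and a: "a \<in> cells C u v" and u: "u \<in> hom C X2 X1"
    and h: "h \<in> hom C Q Y" and p: "p \<in> cells C h h'" "p' \<in> cells C h h'" and pe: "rwh C p e = rwh C p' e"
  shows "p = p'"
proof -
  note E = coequifierD[OF co a u]
  have "h' \<in> hom C Q Y" using cells_tgt_in_hom[OF p(1) h] .
  moreover have "rwh C p e \<in> cells C (cmp C h e) (cmp C h' e)" using rwh_in_cells[OF p(1) h E(2)] .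
  ultimately show ?thesis
    by (rule ex1_unique[OF coequifier_universal(2)[OF co hom_obs(2)[OF h] h]]) (use p pe in simp_all)
qed

lemma is_coequifierI:
  assumes a: "a \<in> cells C u v" and b: "b \<in> cells C u v" and u: "u \<in> hom C X2 X1"
    and Q: "Q \<in> Ob C" and e: "e \<in> hom C X1 Q" and eab: "lwh C e a = lwh C e b"
    and factor: "\<And>Y g. g \<in> hom C X1 Y \<Longrightarrow> lwh C g a = lwh C g b \<Longrightarrow> \<exists>h. h \<in> hom C Q Y \<and> cmp C h e = g"
    and cancel: "\<And>Y h h'. h \<in> hom C Q Y \<Longrightarrow> h' \<in> hom C Q Y \<Longrightarrow> cmp C h e = cmp C h' e \<Longrightarrow> h = h'"
    and factor2: "\<And>Y h h' t. h \<in> hom C Q Y \<Longrightarrow> h' \<in> hom C Q Y \<Longrightarrow>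
      t \<in> cells C (cmp C h e) (cmp C h' e) \<Longrightarrow> \<exists>p. p \<in> cells C h h' \<and> rwh C p e = t"
    and cancel2: "\<And>Y h h' p p'. h \<in> hom C Q Y \<Longrightarrow> p \<in> cells C h h' \<Longrightarrow> p' \<in> cells C h h' \<Longrightarrow>
      rwh C p e = rwh C p' e \<Longrightarrow> p = p'"
  shows "is_coequifier C a b Q e"
proof -
  have X1: "cod1 C (src2 C a) = X1" using cellsD(2)[OF a] homD(3)[OF u] by simp
  have "\<forall>Y \<in> Ob C. \<forall>g \<in> hom C (cod1 C (src2 C a)) Y. lwh C g a = lwh C g b \<longrightarrow>
      (\<exists>!h. h \<in> hom C Q Y \<and> cmp C h e = g)"
    unfolding X1 using factor cancel by blast
  moreover have "\<forall>Y \<in> Ob C. \<forall>h \<in> hom C Q Y. \<forall>h' \<in> hom C Q Y. \<forall>t \<in> cells C (cmp C h e) (cmp C h' e).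
      \<exists>!p. p \<in> cells C h h' \<and> rwh C p e = t"
    using factor2 cancel2 by blast
  ultimately show ?thesis
    unfolding is_coequifier_def using cellsD[OF a] cellsD[OF b] Q e eab X1 by simp
qed

lemma coequifier_precomp_iso:
  assumes co: "is_coequifier C a b Q e" and a: "a \<in> cells C u v" and u: "u \<in> hom C X2 X1"
    and x: "x \<in> hom C A X1" and xi: "xi \<in> hom C X1 A"
    and inv: "cmp C xi x = idm C A" "cmp C x xi = idm C X1"
  shows "is_coequifier C (lwh C xi a) (lwh C xi b) Q (cmp C e x)"
proof -
  note E = coequifierD[OF co a u]
  note T = homD[OF x] homD[OF xi] homD[OF E(2)] inv
  note iso_simps = T normalize_composites cmp_idm_Mor rwh_idm_Cell
  have exi: "cmp C (cmp C e x) xi = e" by (simp add: iso_simps)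
  have whisker_xi: "lwh C g (lwh C xi c) = lwh C (cmp C g xi) c" if "c \<in> cells C u v" "g \<in> hom C A Y" for c g Y
    using lwh_lwh[OF that(1) u xi that(2)] .
  show ?thesis
  proof (rule is_coequifierI[OF lwh_in_cells[OF a u xi] lwh_in_cells[OF E(4) u xi] cmp_in_hom[OF u xi] E(1)
        cmp_in_hom[OF x E(2)]])
    show "lwh C (cmp C e x) (lwh C xi a) = lwh C (cmp C e x) (lwh C xi b)"
      using whisker_xi[OF a cmp_in_hom[OF x E(2)]] whisker_xi[OF E(4) cmp_in_hom[OF x E(2)]] exi E(3) by simp
  next
    fix Y g assume g: "g \<in> hom C A Y" and gab: "lwh C g (lwh C xi a) = lwh C g (lwh C xi b)"
    then obtain h where h: "h \<in> hom C Q Y" "cmp C h e = cmp C g xi"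
      using coequifier_factor[OF co a u cmp_in_hom[OF xi g]] whisker_xi[OF a g] whisker_xi[OF E(4) g] by metis
    have "cmp C h (cmp C e x) = g"
      using arg_cong[OF h(2), of "\<lambda>k. cmp C k x"] by (simp add: iso_simps homD[OF g] homD[OF h(1)])
    with h(1) show "\<exists>h. h \<in> hom C Q Y \<and> cmp C h (cmp C e x) = g" by blast
  next
    fix Y h h' assume h: "h \<in> hom C Q Y" "h' \<in> hom C Q Y" and hh: "cmp C h (cmp C e x) = cmp C h' (cmp C e x)"
    have "cmp C h e = cmp C h' e"
      using arg_cong[OF hh, of "\<lambda>k. cmp C k xi"] by (simp add: iso_simps homD[OF h(1)] homD[OF h(2)])
    then show "h = h'" using coequifier_cancel[OF co a u h] by blast
  next
    fix Y h h' t assume h: "h \<in> hom C Q Y" "h' \<in> hom C Q Y"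
      and t: "t \<in> cells C (cmp C h (cmp C e x)) (cmp C h' (cmp C e x))"
    have "rwh C t xi \<in> cells C (cmp C h e) (cmp C h' e)"
      using rwh_in_cells[OF t cmp_in_hom[OF cmp_in_hom[OF x E(2)] h(1)] xi]
      by (simp add: iso_simps homD[OF h(1)] homD[OF h(2)])
    then obtain p where p: "p \<in> cells C h h'" "rwh C p e = rwh C t xi"
      using coequifier_factor2[OF co h] by blast
    have "rwh C p (cmp C e x) = t"
      using arg_cong[OF p(2), of "\<lambda>s. rwh C s x"] cellsD[OF p(1)] cellsD[OF t]
      by (simp add: iso_simps homD[OF h(1)] homD[OF h(2)])
    with p(1) show "\<exists>p. p \<in> cells C h h' \<and> rwh C p (cmp C e x) = t" by blast
  next
    fix Y h h' p p' assume h: "h \<in> hom C Q Y" and p: "p \<in> cells C h h'" "p' \<in> cells C h h'"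
      and pp: "rwh C p (cmp C e x) = rwh C p' (cmp C e x)"
    have "rwh C p e = rwh C p' e"
      using arg_cong[OF pp, of "\<lambda>s. rwh C s xi"] cellsD[OF p(1)] cellsD[OF p(2)]
      by (simp add: iso_simps homD[OF h])
    then show "p = p'" using coequifier_cancel2[OF co a u h p] by blast
  qed
qed

lemma coequifier_postcomp_iso:
  assumes co: "is_coequifier C a b Q e" and a: "a \<in> cells C u v" and u: "u \<in> hom C X2 X1"
    and y: "y \<in> hom C Q B" and yi: "yi \<in> hom C B Q"
    and inv: "cmp C yi y = idm C Q" "cmp C y yi = idm C B"
  shows "is_coequifier C a b B (cmp C y e)"
proof -
  note E = coequifierD[OF co a u]
  note T = homD[OF y] homD[OF yi] homD[OF E(2)] inv
  note iso_simps = T normalize_composites cmp_idm_Mor rwh_idm_Cell cmp_inverse_Mor[OF inv(1) y yi]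
  have ye: "cmp C y e \<in> hom C X1 B" using cmp_in_hom[OF E(2) y] .
  show ?thesis
  proof (rule is_coequifierI[OF a E(4) u hom_obs(2)[OF y] ye])
    show "lwh C (cmp C y e) a = lwh C (cmp C y e) b"
      using lwh_lwh[OF a u E(2) y] lwh_lwh[OF E(4) u E(2) y] E(3) by simp
  next
    fix Y g assume g: "g \<in> hom C X1 Y" and gab: "lwh C g a = lwh C g b"
    obtain h where h: "h \<in> hom C Q Y" "cmp C h e = g" using coequifier_factor[OF co a u g gab] .
    have "cmp C (cmp C h yi) (cmp C y e) = g"
      using h(2) by (simp add: iso_simps homD[OF h(1)])
    with cmp_in_hom[OF yi h(1)] show "\<exists>h. h \<in> hom C B Y \<and> cmp C h (cmp C y e) = g" by blast
  next
    fix Y h h' assume h: "h \<in> hom C B Y" "h' \<in> hom C B Y" and hh: "cmp C h (cmp C y e) = cmp C h' (cmp C y e)"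
    have "cmp C (cmp C h y) e = cmp C (cmp C h' y) e"
      using hh by (simp add: iso_simps homD[OF h(1)] homD[OF h(2)])
    then have "cmp C h y = cmp C h' y"
      using coequifier_cancel[OF co a u cmp_in_hom[OF y h(1)] cmp_in_hom[OF y h(2)]] by blast
    then have "cmp C (cmp C h y) yi = cmp C (cmp C h' y) yi" by simp
    then show "h = h'" by (simp add: iso_simps homD[OF h(1)] homD[OF h(2)])
  next
    fix Y h h' t assume h: "h \<in> hom C B Y" "h' \<in> hom C B Y"
      and t: "t \<in> cells C (cmp C h (cmp C y e)) (cmp C h' (cmp C y e))"
    have "t \<in> cells C (cmp C (cmp C h y) e) (cmp C (cmp C h' y) e)"
      using t by (simp add: iso_simps homD[OF h(1)] homD[OF h(2)])
    then obtain p where p: "p \<in> cells C (cmp C h y) (cmp C h' y)" "rwh C p e = t"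
      using coequifier_factor2[OF co cmp_in_hom[OF y h(1)] cmp_in_hom[OF y h(2)]] by blast
    have "rwh C p yi \<in> cells C h h'"
      using rwh_in_cells[OF p(1) cmp_in_hom[OF y h(1)] yi] by (simp add: iso_simps homD[OF h(1)] homD[OF h(2)])
    moreover have "rwh C (rwh C p yi) (cmp C y e) = t"
      using p(2) cellsD[OF p(1)] by (simp add: iso_simps homD[OF h(1)] homD[OF h(2)])
    ultimately show "\<exists>p. p \<in> cells C h h' \<and> rwh C p (cmp C y e) = t" by blast
  next
    fix Y h h' p p' assume h: "h \<in> hom C B Y" and p: "p \<in> cells C h h'" "p' \<in> cells C h h'"
      and pp: "rwh C p (cmp C y e) = rwh C p' (cmp C y e)"
    have hy: "cmp C h y \<in> hom C Q Y" using cmp_in_hom[OF y h] .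
    have "rwh C (rwh C p y) e = rwh C (rwh C p' y) e"
      using pp cellsD[OF p(1)] cellsD[OF p(2)] by (simp add: iso_simps homD[OF h])
    then have "rwh C p y = rwh C p' y"
      using coequifier_cancel2[OF co a u hy rwh_in_cells[OF p(1) h y] rwh_in_cells[OF p(2) h y]] by blast
    then have "rwh C (rwh C p y) yi = rwh C (rwh C p' y) yi" by simp
    then show "p = p'" using cellsD[OF p(1)] cellsD[OF p(2)] by (simp add: iso_simps homD[OF h])
  qed
qed

lemma coequifier_of_whiskered:
  assumes co: "is_coequifier C (rwh C \<alpha> z) (rwh C \<beta> z) B f"
    and \<alpha>: "\<alpha> \<in> cells C u v" and \<beta>: "\<beta> \<in> cells C u v" and u: "u \<in> hom C E A" and z: "z \<in> hom C X E"
    and f\<alpha>\<beta>: "lwh C f \<alpha> = lwh C f \<beta>"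
  shows "is_coequifier C \<alpha> \<beta> B f"
proof -
  have \<alpha>z: "rwh C \<alpha> z \<in> cells C (cmp C u z) (cmp C v z)" using rwh_in_cells[OF \<alpha> u z] .
  have uz: "cmp C u z \<in> hom C X A" using cmp_in_hom[OF z u] .
  note F = coequifierD(1,2)[OF co \<alpha>z uz]
  show ?thesis
  proof (rule is_coequifierI[OF \<alpha> \<beta> u F f\<alpha>\<beta>])
    fix Y g assume g: "g \<in> hom C A Y" and g\<alpha>\<beta>: "lwh C g \<alpha> = lwh C g \<beta>"
    then have "lwh C g (rwh C \<alpha> z) = lwh C g (rwh C \<beta> z)"
      using lwh_rwh[OF \<alpha> u z g] lwh_rwh[OF \<beta> u z g] by simp
    then show "\<exists>h. h \<in> hom C B Y \<and> cmp C h f = g"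
      using coequifier_factor[OF co \<alpha>z uz g] by blast
  next
    fix Y h h' assume "h \<in> hom C B Y" "h' \<in> hom C B Y" "cmp C h f = cmp C h' f"
    then show "h = h'" using coequifier_cancel[OF co \<alpha>z uz] by blast
  next
    fix Y h h' t assume "h \<in> hom C B Y" "h' \<in> hom C B Y" "t \<in> cells C (cmp C h f) (cmp C h' f)"
    then show "\<exists>p. p \<in> cells C h h' \<and> rwh C p f = t" using coequifier_factor2[OF co] by blast
  next
    fix Y h h' p p' assume "h \<in> hom C B Y" "p \<in> cells C h h'" "p' \<in> cells C h h'" "rwh C p f = rwh C p' f"
    then show "p = p'" using coequifier_cancel2[OF co \<alpha>z uz] by blast
  qed
qed

lemma bof_quotient_map_coequifier:
  assumes "bof_quotient_map C f"
  obtains X2 u v a b where "a \<in> cells C u v" "b \<in> cells C u v" "u \<in> hom C X2 (dom1 C f)"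
    "is_coequifier C a b (cod1 C f) f"
proof -
  obtain X2 X1 u v a b Q e where diagram: "bof_diagram C X2 X1 u v a b"
    and co: "is_coequifier C a b Q e" and iso: "arrow_iso C f e"
    using assms unfolding bof_quotient_map_def by blast
  have a: "a \<in> cells C u v" and u: "u \<in> hom C X2 X1"
    using diagram unfolding bof_diagram_def by blast+
  note E = coequifierD[OF co a u]
  obtain x y where x: "x \<in> hom C (dom1 C f) X1" and y: "y \<in> hom C (cod1 C f) Q"
    and isos: "iso1 C x" "iso1 C y" and square: "cmp C e x = cmp C y f"
    using iso homD(2,3)[OF E(2)] unfolding arrow_iso_def by auto
  obtain xi where xi: "xi \<in> hom C X1 (dom1 C f)" "cmp C xi x = idm C (dom1 C f)" "cmp C x xi = idm C X1"
    using iso1_inverse[OF isos(1) x] .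
  obtain yi where yi: "yi \<in> hom C Q (cod1 C f)" "cmp C yi y = idm C (cod1 C f)" "cmp C y yi = idm C Q"
    using iso1_inverse[OF isos(2) y] .
  have f: "f \<in> hom C (dom1 C f) (cod1 C f)" using assms unfolding bof_quotient_map_def hom_def by blast
  have "cmp C yi (cmp C e x) = f"
    using square cmp_assoc[OF f y yi(1)] yi(2) cmp_idm_left[OF f] by simp
  moreover have "is_coequifier C (lwh C xi a) (lwh C xi b) (cod1 C f) (cmp C yi (cmp C e x))"
    using coequifier_postcomp_iso[OF coequifier_precomp_iso[OF co a u x xi(1-3)]
        lwh_in_cells[OF a u xi(1)] cmp_in_hom[OF u xi(1)] yi(1) y yi(3,2)] .
  ultimately show thesis
    using that lwh_in_cells[OF a u xi(1)] lwh_in_cells[OF E(4) u xi(1)] cmp_in_hom[OF u xi(1)] by metis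
qed

end

theorem proposition5p12:
  fixes C :: "('o, 'm, 'c) two_cat"
  assumes "two_category C"
    and "finitely_complete C"
    and "bof_quotient_map C f"
  shows "effective_bof_quotient_map C f"
proof -
  interpret strict_two_category C by unfold_locales (rule assms(1))
  obtain X2 u v a b where a: "a \<in> cells C u v" and b: "b \<in> cells C u v"
    and u: "u \<in> hom C X2 (dom1 C f)" and co: "is_coequifier C a b (cod1 C f) f"
    using bof_quotient_map_coequifier[OF assms(3)] .
  have f: "f \<in> hom C (dom1 C f) (cod1 C f)" using coequifierD(2)[OF co a u] .
  obtain E ku kv \<alpha> \<beta> where ker: "is_bof_kernel C f E ku kv \<alpha> \<beta>"
    using bof_kernel_exists[OF assms(2) f] by blast
  have ku: "ku \<in> hom C E (dom1 C f)" and \<alpha>\<beta>: "\<alpha> \<in> cells C ku kv" "\<beta> \<in> cells C ku kv"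
    and f\<alpha>\<beta>: "lwh C f \<alpha> = lwh C f \<beta>"
    using ker unfolding is_bof_kernel_def by blast+
  obtain z where z: "z \<in> hom C X2 E" "rwh C \<alpha> z = a" "rwh C \<beta> z = b"
    using is_bof_kernel_factor[OF ker u a b coequifierD(3)[OF co a u]] .
  have "is_coequifier C \<alpha> \<beta> (cod1 C f) f"
    using coequifier_of_whiskered[OF _ \<alpha>\<beta> ku z(1) f\<alpha>\<beta>] co z(2,3) by simp
  moreover have "idm C (cod1 C f) \<in> hom C (cod1 C f) (cod1 C f)" "cmp C (idm C (cod1 C f)) f = f"
    "iso1 C (idm C (cod1 C f))"
    using idm_in_hom cmp_idm_left[OF f] iso1_idm hom_obs(2)[OF f] by blast+
  ultimately show ?thesis
    unfolding effective_bof_quotient_map_def using homD(1)[OF f] ker by blast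
qed

end
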